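(* Let $\mathcal{A}_1,\dots,\mathcal{A}_n$ be finite labelled transition systems, let $\mathbf{A}=\mathcal{A}_1\parallel\cdots\parallel\mathcal{A}_n$, and let $\mathcal{A}_i$ be the interface. Assume that $\mathbf{A}$ is non-divergent (with respect to the interface $\mathcal{A}_i$). Then every run of Algorithm 1 with cut-off definition 1 (for every choice of the order in which possible extensions are added) terminates with a finite branching process $\mathcal{N}$ of $\mathbf{A}$, and the folding $\mathcal{S}_i$ of the interface projection $\mathcal{N}_i$ satisfies $\mathrm{Tr}(\mathcal{S}_i)=\mathrm{Tr}(\mathbf{A})|_{\Sigma_i}$, i.e. $\mathcal{S}_i$ is a summary of $\mathbf{A}$.
   Context: A labelled transition system (LTS) is $\mathcal{A}=(\Sigma,S,T,\lambda,s^0)$ with finite action set $\Sigma$, finite state set $S$, transitions $T\subseteq S\times S$, labelling $\lambda:T\to\Sigma$, initial state $s^0$. A finite or infinite sequence $t_1t_2\dots$ of transitions is an execution if $t_k=(s_{k-1},s_k)$ for states $s_0s_1\dots$; it is a history if $s_0=s^0$. A trace is the label sequence $\lambda(t_1)\lambda(t_2)\dots$ of a (finite or infinite) history; $\mathrm{Tr}(\mathcal{A})$ is the set of traces. For LTSs $\mathcal{A}_j=(\Sigma_j,S_j,T_j,\lambda_j,s^0_j)$, $j=1..n$, the parallel composition $\mathbf{A}=\mathcal{A}_1\parallel\cdots\parallel\mathcal{A}_n$ has actions $\Sigma=\bigcup_j\Sigma_j$, global states $(s_1,\dots,s_n)\in S_1\times\cdots\times S_n$, initial state $(s^0_1,\dots,s^0_n)$,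 and global transitions $\mathbf{t}=(t_1,\dots,t_n)\ne(\star,\dots,\star)$ with label $a$ such that for each $j$: $t_j$ is an $a$-transition of $T_j$ if $a\in\Sigma_j$, and $t_j=\star$ otherwise ($\mathbf{t}$ moves each $\mathcal{A}_j$ with $t_j\ne\star$ along $t_j$ and leaves the others unchanged; $\mathcal{A}_j$ participates in $\mathbf{t}$ iff $t_j\neq\star$). The preset ${}^\bullet\mathbf{t}$ is the set of source states of the $t_j\neq\star$, the postset $\mathbf{t}^\bullet$ the set of their target states. For a set $X$ of traces, $X|_{\Sigma_i}$ is the set of projections of its elements onto $\Sigma_i$ (deleting letters not in $\Sigma_i$). $\mathbf{A}$ with interface $\mathcal{A}_i$ is divergent if some infinite trace of $\mathbf{A}$ contains only finitely many occurrences of actions of $\Sigma_i$. Branching processes of $\mathbf{A}$ are Petri nets whose places (conditions) are labelled by local states and whose transitions (events) are labelled by global transitions (hence by actions), defined inductively: (1) the net with conditions $b^0_1,\dots,b^0_n$ labelled $s^0_1,\dots,s^0_n$, no events, initial marking $\{b^0_1,\dots,b^0_n\}$ is one; (2) if some reachable marking of a branching process $\mathcal{N}$ contains a set $M$ of conditions whose labels are exactly ${}^\bullet\mathbf{t}$ for a global transition $\mathbf{t}$, and $\mathcal{N}$ has no event labelled $\mathbf{t}$ with input set $M$, then adding a new event $e$ labelled $\mathbf{t}$ with input conditions $M$ and a fresh output condition labelled $s$ for every $s\in\mathbf{t}^\bullet$ yields a branching process (such an $e$ is a possible extension). $x<y$ means there is a nonempty arc path from node $x$ to node $y$. The past of event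 $e$ is $[e]=\{e':e'\le e\}$; $M(e)$ is the marking reached by firing exactly the events of $[e]$ from the initial marking; $M(e)_j$ is its unique condition labelled by a state of $\mathcal{A}_j$; $\mathrm{St}(e)$ is the global state formed by the labels of $M(e)$. An $i$-event is an event in which $\mathcal{A}_i$ participates. Interface projection: $\mathcal{N}_i$ is the LTS whose states are the conditions labelled by states of $\mathcal{A}_i$, initial state $b^0_i$, with a transition from $b$ to $b'$ labelled $a$ for each $i$-event with action $a$, input $i$-condition $b$ and output $i$-condition $b'$. Given an equivalence $\equiv$ on its states, the folding has states the classes $[b]_\equiv$, initial state $[b^0_i]_\equiv$, and a transition $([b]_\equiv,[b']_\equiv)$ labelled $a$ for each transition $(b,b')$ labelled $a$ of $\mathcal{N}_i$. Algorithm 1: start with the branching process without events and $co=\emptyset$. While there is a possible extension $e$ none of whose causal predecessors lies in $co$, choose any such $e$ and add it to $\mathcal{N}$; by cut-off definition 1, $e$ is a cut-off (put in $co$) if it is an $i$-event and $\mathcal{N}$ already contains another $i$-event $e'$ with $\mathrm{St}(e)=\mathrm{St}(e')$ ($e'$ is its companion). On termination, $\equiv$ is the smallest equivalence relation on $i$-conditions with $M(e)_i\equiv M(e')_i$ for every cut-off $e$ with companion $e'$, and the output is the folding $\mathcal{S}_i$ of $\mathcal{N}_i$ under $\equiv$. *)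

theory Defs
  imports Main "HOL-Library.FSet" "HOL-Library.Infinite_Set"
begin

record ('a, 's) lts =
  lts_acts  :: "'a set"
  lts_states :: "'s set"
  lts_trans :: "('s \<times> 's) set"
  lts_lab   :: "'s \<times> 's \<Rightarrow> 'a"
  lts_init  :: 's

definition finite_lts :: "('a, 's) lts \<Rightarrow> bool" where
  "finite_lts L \<longleftrightarrow> finite (lts_acts L) \<and> finite (lts_states L)
     \<and> lts_trans L \<subseteq> lts_states L \<times> lts_states L
     \<and> lts_init L \<in> lts_states L
     \<and> (\<forall>t \<in> lts_trans L. lts_lab L t \<in> lts_acts L)"

datatype 'a trace = Fin "'a list" | Inf "nat \<Rightarrow> 'a"

definition traces_of :: "'g \<Rightarrow> ('g \<Rightarrow> 'a \<Rightarrow> 'g \<Rightarrow> bool) \<Rightarrow> 'a trace set" where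
  "traces_of g0 step =
     {Fin xs | xs. \<exists>s. s 0 = g0 \<and> (\<forall>k < length xs. step (s k) (xs ! k) (s (Suc k)))}
   \<union> {Inf w | w. \<exists>s. s 0 = g0 \<and> (\<forall>k. step (s k) (w k) (s (Suc k)))}"

definition lts_step :: "('a, 's) lts \<Rightarrow> 's \<Rightarrow> 'a \<Rightarrow> 's \<Rightarrow> bool" where
  "lts_step L s a s' \<longleftrightarrow> (s, s') \<in> lts_trans L \<and> lts_lab L (s, s') = a"

definition Tr :: "('a, 's) lts \<Rightarrow> 'a trace set" where
  "Tr L = traces_of (lts_init L) (lts_step L)"

fun proj :: "'a set \<Rightarrow> 'a trace \<Rightarrow> 'a trace" where
  "proj B (Fin xs) = Fin (filter (\<lambda>a. a \<in> B) xs)"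
| "proj B (Inf w) =
     (if infinite {k. w k \<in> B} then Inf (w \<circ> enumerate {k. w k \<in> B})
      else Fin (map w (sorted_list_of_set {k. w k \<in> B})))"

text \<open>A global transition: an action together with a vector of local transitions,
  None playing the role of the idle symbol (star).\<close>
type_synonym 's gvec = "nat \<Rightarrow> ('s \<times> 's) option"

definition gacts :: "(nat \<Rightarrow> ('a, 's) lts) \<Rightarrow> nat \<Rightarrow> 'a set" where
  "gacts A n = (\<Union>j<n. lts_acts (A j))"

definition gtrans :: "(nat \<Rightarrow> ('a, 's) lts) \<Rightarrow> nat \<Rightarrow> ('a \<times> 's gvec) set" where
  "gtrans A n = {(a, t). a \<in> gacts A n \<and> (\<exists>j<n. t j \<noteq> None) \<and> (\<forall>j\<ge>n. t j = None)
      \<and> (\<forall>j<n. if a \<in> lts_acts (A j)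
                then (\<exists>tr. t j = Some tr \<and> tr \<in> lts_trans (A j) \<and> lts_lab (A j) tr = a)
                else t j = None)}"

definition gmove :: "'s gvec \<Rightarrow> (nat \<Rightarrow> 's) \<Rightarrow> (nat \<Rightarrow> 's) \<Rightarrow> bool" where
  "gmove t g g' \<longleftrightarrow> (\<forall>j. case t j of None \<Rightarrow> g' j = g j | Some (p, q) \<Rightarrow> g j = p \<and> g' j = q)"

definition ginit :: "(nat \<Rightarrow> ('a, 's) lts) \<Rightarrow> nat \<Rightarrow> 's" where
  "ginit A = (\<lambda>j. lts_init (A j))"

definition gstep :: "(nat \<Rightarrow> ('a, 's) lts) \<Rightarrow> nat \<Rightarrow> (nat \<Rightarrow> 's) \<Rightarrow> 'a \<Rightarrow> (nat \<Rightarrow> 's) \<Rightarrow> bool" where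
  "gstep A n g a g' \<longleftrightarrow> (\<exists>t. (a, t) \<in> gtrans A n \<and> gmove t g g')"

definition TrPar :: "(nat \<Rightarrow> ('a, 's) lts) \<Rightarrow> nat \<Rightarrow> 'a trace set" where
  "TrPar A n = traces_of (ginit A) (gstep A n)"

definition divergent :: "(nat \<Rightarrow> ('a, 's) lts) \<Rightarrow> nat \<Rightarrow> nat \<Rightarrow> bool" where
  "divergent A n i \<longleftrightarrow> (\<exists>w. Inf w \<in> TrPar A n \<and> finite {k. w k \<in> lts_acts (A i)})"

text \<open>Conditions are named by their origin: an initial condition of component j,
  or the output condition of component j of an event. Events are named by their
  label (global transition) and their set of input conditions.\<close>
datatype ('a, 's) cond = C0 nat 's | Cout "('a, 's) event" nat
     and ('a, 's) event = Ev 'a "'s gvec" "('a, 's) cond fset"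

fun eact :: "('a, 's) event \<Rightarrow> 'a" where "eact (Ev a t M) = a"
fun etr :: "('a, 's) event \<Rightarrow> 's gvec" where "etr (Ev a t M) = t"
fun ein :: "('a, 's) event \<Rightarrow> ('a, 's) cond set" where "ein (Ev a t M) = fset M"

fun clabel :: "('a, 's) cond \<Rightarrow> nat \<times> 's" where
  "clabel (C0 j s) = (j, s)"
| "clabel (Cout e j) = (j, snd (the (etr e j)))"

definition eout :: "('a, 's) event \<Rightarrow> ('a, 's) cond set" where
  "eout e = {Cout e j | j. etr e j \<noteq> None}"

definition preset :: "'s gvec \<Rightarrow> (nat \<times> 's) set" where
  "preset t = {(j, fst tr) | j tr. t j = Some tr}"

definition M0 :: "(nat \<Rightarrow> ('a, 's) lts) \<Rightarrow> nat \<Rightarrow> ('a, 's) cond set" where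
  "M0 A n = {C0 j (lts_init (A j)) | j. j < n}"

definition conds :: "(nat \<Rightarrow> ('a, 's) lts) \<Rightarrow> nat \<Rightarrow> ('a, 's) event set \<Rightarrow> ('a, 's) cond set" where
  "conds A n E = M0 A n \<union> (\<Union>e\<in>E. eout e)"

inductive reach :: "(nat \<Rightarrow> ('a, 's) lts) \<Rightarrow> nat \<Rightarrow> ('a, 's) event set \<Rightarrow> ('a, 's) cond set \<Rightarrow> bool"
  for A n E where
  "reach A n E (M0 A n)"
| "reach A n E K \<Longrightarrow> e \<in> E \<Longrightarrow> ein e \<subseteq> K \<Longrightarrow> reach A n E ((K - ein e) \<union> eout e)"

definition pext :: "(nat \<Rightarrow> ('a, 's) lts) \<Rightarrow> nat \<Rightarrow> ('a, 's) event set \<Rightarrow> ('a, 's) event \<Rightarrow> bool" where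
  "pext A n E e \<longleftrightarrow> e \<notin> E \<and> (eact e, etr e) \<in> gtrans A n
     \<and> (\<exists>K. reach A n E K \<and> ein e \<subseteq> K) \<and> clabel ` ein e = preset (etr e)"

inductive bp :: "(nat \<Rightarrow> ('a, 's) lts) \<Rightarrow> nat \<Rightarrow> ('a, 's) event set \<Rightarrow> bool" for A n where
  "bp A n {}"
| "bp A n E \<Longrightarrow> pext A n E e \<Longrightarrow> bp A n (insert e E)"

definition dpred :: "(('a, 's) event \<times> ('a, 's) event) set" where
  "dpred = {(e', e). \<exists>j. Cout e' j \<in> ein e}"

definition causal_less :: "('a, 's) event \<Rightarrow> ('a, 's) event \<Rightarrow> bool" where
  "causal_less e' e \<longleftrightarrow> (e', e) \<in> dpred\<^sup>+"

definition past :: "('a, 's) event \<Rightarrow> ('a, 's) event set" where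
  "past e = {e'. (e', e) \<in> dpred\<^sup>*}"

text \<open>M(e): the marking reached by firing exactly the events of the past of e.\<close>
definition Mark :: "(nat \<Rightarrow> ('a, 's) lts) \<Rightarrow> nat \<Rightarrow> ('a, 's) event \<Rightarrow> ('a, 's) cond set" where
  "Mark A n e = (M0 A n \<union> (\<Union>x\<in>past e. eout x)) - (\<Union>x\<in>past e. ein x)"

definition Mj :: "(nat \<Rightarrow> ('a, 's) lts) \<Rightarrow> nat \<Rightarrow> ('a, 's) event \<Rightarrow> nat \<Rightarrow> ('a, 's) cond" where
  "Mj A n e j = (THE b. b \<in> Mark A n e \<and> fst (clabel b) = j)"

definition St :: "(nat \<Rightarrow> ('a, 's) lts) \<Rightarrow> nat \<Rightarrow> ('a, 's) event \<Rightarrow> nat \<Rightarrow> 's" where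
  "St A n e = (\<lambda>j. if j < n then snd (clabel (Mj A n e j)) else undefined)"

definition ievent :: "nat \<Rightarrow> ('a, 's) event \<Rightarrow> bool" where
  "ievent i e \<longleftrightarrow> etr e i \<noteq> None"

text \<open>State: events added so far, and the set of pairs (cut-off, chosen companion).\<close>
type_synonym ('a, 's) alg_state = "('a, 's) event set \<times> (('a, 's) event \<times> ('a, 's) event) set"

definition allowed_ext :: "(nat \<Rightarrow> ('a, 's) lts) \<Rightarrow> nat \<Rightarrow> ('a, 's) alg_state \<Rightarrow> ('a, 's) event \<Rightarrow> bool" where
  "allowed_ext A n s e \<longleftrightarrow> pext A n (fst s) e \<and> (\<forall>e'. causal_less e' e \<longrightarrow> e' \<notin> fst ` snd s)"

definition is_companion :: "(nat \<Rightarrow> ('a, 's) lts) \<Rightarrow> nat \<Rightarrow> nat \<Rightarrow> ('a, 's) event set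
    \<Rightarrow> ('a, 's) event \<Rightarrow> ('a, 's) event \<Rightarrow> bool" where
  "is_companion A n i E e e' \<longleftrightarrow> ievent i e \<and> e' \<in> E \<and> e' \<noteq> e \<and> ievent i e' \<and> St A n e = St A n e'"

definition alg_step :: "(nat \<Rightarrow> ('a, 's) lts) \<Rightarrow> nat \<Rightarrow> nat \<Rightarrow> ('a, 's) alg_state \<Rightarrow> ('a, 's) alg_state \<Rightarrow> bool" where
  "alg_step A n i s s' \<longleftrightarrow> (\<exists>e. allowed_ext A n s e \<and> fst s' = insert e (fst s) \<and>
      ((\<not> (\<exists>e'. is_companion A n i (fst s) e e') \<and> snd s' = snd s)
       \<or> (\<exists>e'. is_companion A n i (fst s) e e' \<and> snd s' = insert (e, e') (snd s))))"

definition alg_terminated :: "(nat \<Rightarrow> ('a, 's) lts) \<Rightarrow> nat \<Rightarrow> ('a, 's) alg_state \<Rightarrow> bool" where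
  "alg_terminated A n s \<longleftrightarrow> \<not> (\<exists>e. allowed_ext A n s e)"

definition iconds :: "(nat \<Rightarrow> ('a, 's) lts) \<Rightarrow> nat \<Rightarrow> nat \<Rightarrow> ('a, 's) event set \<Rightarrow> ('a, 's) cond set" where
  "iconds A n i E = {b \<in> conds A n E. fst (clabel b) = i}"

definition Ntrans :: "nat \<Rightarrow> ('a, 's) event set \<Rightarrow> (('a, 's) cond \<times> 'a \<times> ('a, 's) cond) set" where
  "Ntrans i E = {(b, eact e, Cout e i) | e b. e \<in> E \<and> ievent i e \<and> b \<in> ein e \<and> fst (clabel b) = i}"

definition foldeq :: "(nat \<Rightarrow> ('a, 's) lts) \<Rightarrow> nat \<Rightarrow> nat \<Rightarrow> ('a, 's) alg_state \<Rightarrow> (('a, 's) cond \<times> ('a, 's) cond) set" where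
  "foldeq A n i s =
     (let R = {(Mj A n e i, Mj A n e' i) | e e'. (e, e') \<in> snd s}
      in (Id_on (iconds A n i (fst s)) \<union> R \<union> R\<inverse>)\<^sup>*)"

definition fold_step :: "(nat \<Rightarrow> ('a, 's) lts) \<Rightarrow> nat \<Rightarrow> nat \<Rightarrow> ('a, 's) alg_state
    \<Rightarrow> ('a, 's) cond set \<Rightarrow> 'a \<Rightarrow> ('a, 's) cond set \<Rightarrow> bool" where
  "fold_step A n i s X a Y \<longleftrightarrow>
     (\<exists>b b'. (b, a, b') \<in> Ntrans i (fst s) \<and> X = foldeq A n i s `` {b} \<and> Y = foldeq A n i s `` {b'})"

definition TrFold :: "(nat \<Rightarrow> ('a, 's) lts) \<Rightarrow> nat \<Rightarrow> nat \<Rightarrow> ('a, 's) alg_state \<Rightarrow> 'a trace set" where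
  "TrFold A n i s = traces_of (foldeq A n i s `` {C0 i (lts_init (A i))}) (fold_step A n i s)"

end

theory Submission
  imports Defs "HOL-Library.Omega_Words_Fun"
begin

text \<open>
  Events of the canonical unfolding are named by their causal history, so causality is well
  founded, every configuration can be fired event by event, and its marking is a cut whose
  global state is reachable in the composition.

  Algorithm 1 maintains an invariant: no event has a cut-off in its past, and the i-events that
  are not cut-offs have pairwise different global states.  Hence the past of an event contains at
  most |G| + 1 interface actions, where G is the finite set of global states, and non-divergence
  bounds every invisible stretch by |G|, since a longer one revisits a global state and its loop
  can be pumped into a divergent run.  So pasts have bounded size, there are only finitely many
  such events, and every run of the algorithm stops.

  The projection of Tr(A) onto the interface is the trace set of interface steps (invisible moves
  followed by one visible move); non-divergence is needed again for infinite traces.  Each step of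
  the folding from M(e)_i spans an interface step between the states of two local configurations
  (soundness).  Conversely, a stopped run contains every possible extension of a cut-off-free
  configuration, so interface steps from the state of such a configuration are matched by the
  folding, and a cut-off is replaced by a companion with the same state (completeness).
\<close>

section \<open>Causality in the canonical unfolding\<close>

lemma wf_dpred: "wf dpred"
proof (rule wfUNIVI)
  fix P :: "('a, 's) event \<Rightarrow> bool" and x
  assume H: "\<forall>x. (\<forall>y. (y, x) \<in> dpred \<longrightarrow> P y) \<longrightarrow> P x"
  have "(\<forall>e j. c = Cout e j \<longrightarrow> P e) \<and> P x" for c
  proof (rule cond_event.induct[of "\<lambda>c. \<forall>e j. c = Cout e j \<longrightarrow> P e" P])
    fix a t M
    assume IH: "\<And>c. c |\<in>| M \<Longrightarrow> \<forall>e j. c = Cout e j \<longrightarrow> P e"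
    show "P (Ev a t M)"
    proof (rule H[rule_format])
      fix y assume "(y, Ev a t M) \<in> dpred"
      then obtain j where "Cout y j |\<in>| M" by (auto simp: dpred_def)
      with IH show "P y" by blast
    qed
  qed simp_all
  then show "P x" by blast
qed

lemma dpred_iff: "(x, e) \<in> dpred \<longleftrightarrow> (\<exists>j. Cout x j \<in> ein e)"
  by (simp add: dpred_def)

lemma dpred_trancl_irrefl: "(x, x) \<notin> dpred\<^sup>+"
  by (rule wf_not_refl[OF wf_trancl[OF wf_dpred]])

lemma Cout_not_in_ein: "Cout e j \<notin> ein e"
  using dpred_trancl_irrefl by (fastforce simp: dpred_iff)

lemma Cout_eout: "Cout x j \<in> eout e \<longleftrightarrow> x = e \<and> etr e j \<noteq> None"
  by (auto simp: eout_def)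

lemma M0_iff: "c \<in> M0 A n \<longleftrightarrow> (\<exists>j<n. c = C0 j (lts_init (A j)))"
  by (auto simp: M0_def)

lemma Cout_notin_M0: "Cout x j \<notin> M0 A n"
  by (auto simp: M0_def)

lemma finite_M0: "finite (M0 A n)"
proof -
  have "M0 A n = (\<lambda>j. C0 j (lts_init (A j))) ` {..<n}" by (auto simp: M0_def)
  then show ?thesis by simp
qed

lemma past_self: "e \<in> past e"
  by (simp add: past_def)

lemma dpred_past: "(z, x) \<in> dpred \<Longrightarrow> x \<in> past e \<Longrightarrow> z \<in> past e"
  by (auto simp: past_def intro: converse_rtrancl_into_rtrancl)

lemma past_mono: "x \<in> past e \<Longrightarrow> past x \<subseteq> past e"
  by (auto simp: past_def)

lemma causal_less_past: "causal_less x e \<Longrightarrow> x \<in> past e"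
  by (auto simp: causal_less_def past_def)

lemma past_causal_less: "x \<in> past e \<Longrightarrow> x \<noteq> e \<Longrightarrow> causal_less x e"
  by (auto simp: causal_less_def past_def dest: rtranclD)

lemma causal_less_irrefl: "\<not> causal_less e e"
  using dpred_trancl_irrefl by (simp add: causal_less_def)

lemma dpred_not_from_past: "x \<in> past e \<Longrightarrow> (e, x) \<notin> dpred"
  using dpred_trancl_irrefl by (auto simp: past_def intro: rtrancl_into_trancl2)

lemma dpred_past_psubset: "(x, e) \<in> dpred \<Longrightarrow> past x \<subset> past e"
  using past_mono[OF dpred_past[OF _ past_self]] dpred_not_from_past past_self by blast


section \<open>Runs and traces of labelled step relations\<close>

fun run :: "('g \<Rightarrow> 'b \<Rightarrow> 'g \<Rightarrow> bool) \<Rightarrow> 'g \<Rightarrow> 'b list \<Rightarrow> 'g \<Rightarrow> bool" where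
  "run st g [] g' \<longleftrightarrow> g = g'"
| "run st g (a # as) g'' \<longleftrightarrow> (\<exists>g'. st g a g' \<and> run st g' as g'')"

lemma run_append: "run st g (xs @ ys) g'' \<longleftrightarrow> (\<exists>g'. run st g xs g' \<and> run st g' ys g'')"
  by (induction xs arbitrary: g) auto

lemma run_snoc: "run st g (xs @ [a]) g'' \<longleftrightarrow> (\<exists>g'. run st g xs g' \<and> st g' a g'')"
  by (simp add: run_append)

lemma run_of_states:
  assumes "\<forall>k. a \<le> k \<and> k < b \<longrightarrow> st (s k) (w k) (s (Suc k))" and "a \<le> b"
  shows "run st (s a) (map w [a..<b]) (s b)"
  using assms
proof (induction b)
  case (Suc b)
  show ?case
  proof (cases "a = Suc b")
    case False
    then have "a \<le> b" using Suc.prems by simp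
    then have "run st (s a) (map w [a..<b]) (s b)" using Suc by simp
    then show ?thesis using Suc.prems \<open>a \<le> b\<close> by (auto simp: run_snoc)
  qed simp
qed simp

lemma run_states:
  "run st g xs g' \<Longrightarrow>
     \<exists>s. s 0 = g \<and> s (length xs) = g' \<and> (\<forall>k<length xs. st (s k) (xs ! k) (s (Suc k)))"
proof (induction xs arbitrary: g)
  case Nil
  then show ?case by (intro exI[of _ "\<lambda>_. g"]) simp
next
  case (Cons a xs)
  then obtain g1 s where "st g a g1" "s 0 = g1" "s (length xs) = g'"
      "\<forall>k<length xs. st (s k) (xs ! k) (s (Suc k))"
    by fastforce
  then show ?case
    by (intro exI[of _ "case_nat g s"]) (auto simp: less_Suc_eq_0_disj)
qed

lemma traces_Fin: "Fin xs \<in> traces_of g0 st \<longleftrightarrow> (\<exists>g. run st g0 xs g)"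
proof
  assume "Fin xs \<in> traces_of g0 st"
  then obtain s where "s 0 = g0" "\<forall>k<length xs. st (s k) (xs ! k) (s (Suc k))"
    by (auto simp: traces_of_def)
  then show "\<exists>g. run st g0 xs g"
    using run_of_states[of 0 "length xs" st s "(!) xs"] by (auto simp: map_nth)
next
  assume "\<exists>g. run st g0 xs g"
  then show "Fin xs \<in> traces_of g0 st"
    using run_states unfolding traces_of_def by fastforce
qed

lemma traces_Inf:
  "Inf w \<in> traces_of g0 st \<longleftrightarrow> (\<exists>s. s 0 = g0 \<and> (\<forall>k. st (s k) (w k) (s (Suc k))))"
  by (auto simp: traces_of_def)

context
  fixes R :: "'x \<Rightarrow> 'y \<Rightarrow> bool" and st1 :: "'x \<Rightarrow> 'b \<Rightarrow> 'x \<Rightarrow> bool" and st2 :: "'y \<Rightarrow> 'b \<Rightarrow> 'y \<Rightarrow> bool"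
  assumes sim: "\<And>x y a x'. R x y \<Longrightarrow> st1 x a x' \<Longrightarrow> \<exists>y'. st2 y a y' \<and> R x' y'"
begin

lemma simulation_run: "run st1 x xs x' \<Longrightarrow> R x y \<Longrightarrow> \<exists>y'. run st2 y xs y' \<and> R x' y'"
proof (induction xs arbitrary: x y)
  case (Cons a xs)
  then obtain x1 where x1: "st1 x a x1" "run st1 x1 xs x'" by auto
  then obtain y1 where y1: "st2 y a y1" "R x1 y1" using sim Cons.prems(2) by blast
  then obtain y' where "run st2 y1 xs y'" "R x' y'" using Cons.IH[OF x1(2)] by blast
  then show ?case using y1 by auto
qed simp

lemma simulation_infinite_run:
  assumes R0: "R (s 0) y0" and steps: "\<forall>k. st1 (s k) (w k) (s (Suc k))"
  shows "\<exists>t. t 0 = y0 \<and> (\<forall>k. st2 (t k) (w k) (t (Suc k)))"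
proof -
  define t where "t = rec_nat y0 (\<lambda>k y. SOME y'. st2 y (w k) y' \<and> R (s (Suc k)) y')"
  have next_ex: "R (s k) y \<Longrightarrow> \<exists>y'. st2 y (w k) y' \<and> R (s (Suc k)) y'" for k y
    using sim steps by blast
  have R_t: "R (s k) (t k)" for k
  proof (induction k)
    case (Suc k)
    show ?case using someI_ex[OF next_ex[OF Suc]] by (simp add: t_def)
  qed (simp add: t_def R0)
  have "st2 (t k) (w k) (t (Suc k))" for k
    using someI_ex[OF next_ex[OF R_t[of k]]] by (simp add: t_def)
  moreover have "t 0 = y0" by (simp add: t_def)
  ultimately show ?thesis by blast
qed

lemma simulation_traces:
  assumes R0: "R x0 y0"
  shows "traces_of x0 st1 \<subseteq> traces_of y0 st2"
proof
  fix tr assume tr: "tr \<in> traces_of x0 st1"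
  show "tr \<in> traces_of y0 st2"
  proof (cases tr)
    case (Fin xs)
    then obtain x where "run st1 x0 xs x" using tr by (auto simp: traces_Fin)
    then obtain y where "run st2 y0 xs y" using simulation_run R0 by blast
    then show ?thesis using Fin by (auto simp: traces_Fin)
  next
    case (Inf w)
    then obtain s where "s 0 = x0" "\<forall>k. st1 (s k) (w k) (s (Suc k))"
      using tr by (auto simp: traces_Inf)
    then show ?thesis using simulation_infinite_run R0 Inf by (auto simp: traces_Inf)
  qed
qed

end

definition block_start :: "(nat \<Rightarrow> 'a list) \<Rightarrow> nat \<Rightarrow> nat" where
  "block_start l k = (\<Sum>j<k. length (l j))"

definition concat_word :: "(nat \<Rightarrow> 'a list) \<Rightarrow> 'a word" where
  "concat_word l = merge (\<lambda>k m. l k ! (m - block_start l k)) (block_start l)"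

lemma block_start_Suc: "block_start l (Suc k) = block_start l k + length (l k)"
  by (simp add: block_start_def)

lemma idx_sequence_block_start: "\<forall>k. l k \<noteq> [] \<Longrightarrow> idx_sequence (block_start l)"
  by (simp add: idx_sequence_def block_start_Suc block_start_def)

lemma block_startE:
  assumes "\<forall>k. l k \<noteq> []"
  obtains k q where "q < length (l k)" "m = block_start l k + q"
proof -
  obtain k where k: "m \<in> {block_start l k..<block_start l (Suc k)}"
    using idx_sequence_interval[OF idx_sequence_block_start[OF assms]] by blast
  show ?thesis
  proof (rule that)
    show "m - block_start l k < length (l k)" using k by (auto simp: block_start_Suc)
    show "m = block_start l k + (m - block_start l k)" using k by simp
  qed
qed

lemma concat_word_nth:
  assumes "\<forall>k. l k \<noteq> []" and "q < length (l k)"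
  shows "concat_word l (block_start l k + q) = l k ! q"
proof -
  have "block_start l k + q \<in> {block_start l k..<block_start l (Suc k)}"
    using assms(2) by (simp add: block_start_Suc)
  from merge[OF idx_sequence_block_start[OF assms(1)] this,
      of "\<lambda>k m. l k ! (m - block_start l k)"]
  show ?thesis by (simp add: concat_word_def)
qed

lemma run_concat_word:
  assumes ne: "\<forall>k. l k \<noteq> []" and runs: "\<forall>k. run st (h k) (l k) (h (Suc k))"
  shows "\<exists>s. s 0 = h 0 \<and> (\<forall>m. st (s m) (concat_word l m) (s (Suc m)))"
proof -
  obtain \<sigma> where \<sigma>: "\<And>k. \<sigma> k 0 = h k \<and> \<sigma> k (length (l k)) = h (Suc k)
      \<and> (\<forall>q<length (l k). st (\<sigma> k q) (l k ! q) (\<sigma> k (Suc q)))"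
    using run_states[OF runs[rule_format]] by metis
  have idx: "idx_sequence (block_start l)" using idx_sequence_block_start[OF ne] .
  define s where "s = merge (\<lambda>k m. \<sigma> k (m - block_start l k)) (block_start l)"
  have s_at: "s (block_start l k + q) = \<sigma> k q" if "q \<le> length (l k)" for k q
  proof (cases "q = length (l k)")
    case True
    have "block_start l (Suc k) \<in> {block_start l (Suc k)..<block_start l (Suc (Suc k))}"
      using ne by (simp add: block_start_Suc)
    from merge[OF idx this, of "\<lambda>k m. \<sigma> k (m - block_start l k)"]
    have "s (block_start l (Suc k)) = \<sigma> (Suc k) 0" by (simp add: s_def)
    then show ?thesis using True \<sigma> by (simp add: block_start_Suc)
  next
    case False
    then have "block_start l k + q \<in> {block_start l k..<block_start l (Suc k)}"
      using that by (simp add: block_start_Suc)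
    from merge[OF idx this, of "\<lambda>k m. \<sigma> k (m - block_start l k)"]
    show ?thesis by (simp add: s_def)
  qed
  have "st (s m) (concat_word l m) (s (Suc m))" for m
  proof -
    obtain k q where "q < length (l k)" "m = block_start l k + q"
      using block_startE[OF ne] by metis
    then show ?thesis
      using \<sigma> s_at[of q k] s_at[of "Suc q" k] concat_word_nth[OF ne] by simp
  qed
  moreover have "s 0 = h 0" using s_at[of 0 0] \<sigma> by (simp add: block_start_def)
  ultimately show ?thesis by blast
qed

lemma lasso_trace:
  assumes stem: "run st g0 p g" and loop: "run st g c g" and "c \<noteq> []"
  shows "\<exists>w. Inf w \<in> traces_of g0 st \<and> (\<forall>m \<ge> length p + length c. w m \<in> set c)"
proof -
  define l where "l k = (if k = 0 then p @ c else c)" for k :: nat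
  define h where "h k = (if k = 0 then g0 else g)" for k :: nat
  have ne: "\<forall>k. l k \<noteq> []" using \<open>c \<noteq> []\<close> by (simp add: l_def)
  have "\<forall>k. run st (h k) (l k) (h (Suc k))"
    using stem loop by (auto simp: l_def h_def run_append)
  then obtain s where "s 0 = g0" "\<forall>m. st (s m) (concat_word l m) (s (Suc m))"
    using run_concat_word[OF ne] by (fastforce simp: h_def)
  moreover have "concat_word l m \<in> set c" if m: "m \<ge> length p + length c" for m
  proof -
    obtain k q where kq: "q < length (l k)" "m = block_start l k + q"
      using block_startE[OF ne] by metis
    have "k \<noteq> 0"
    proof
      assume "k = 0"
      with kq m show False by (simp add: l_def block_start_def)
    qed
    moreover have "concat_word l m = l k ! q" using concat_word_nth[OF ne kq(1)] kq(2) by simp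
    ultimately show ?thesis using kq(1) by (simp add: l_def)
  qed
  ultimately show ?thesis by (auto simp: traces_Inf)
qed

lemma enumerate_range_strict_mono:
  fixes f :: "nat \<Rightarrow> nat"
  assumes "strict_mono f"
  shows "enumerate (range f) = f"
proof
  have inf: "infinite (range f)"
    using range_inj_infinite strict_mono_imp_inj_on[OF assms] by blast
  fix k show "enumerate (range f) k = f k"
  proof (induction k)
    case 0
    show ?case unfolding enumerate_0
      by (rule Least_equality) (use assms in \<open>auto simp: strict_mono_less_eq\<close>)
  next
    case (Suc k)
    show ?case unfolding enumerate_Suc''[OF inf] Suc
      by (rule Least_equality) (use assms in \<open>auto simp: strict_mono_less strict_mono_less_eq Suc_le_eq\<close>)
  qed
qed

lemma concat_word_marked_positions:
  assumes l: "\<And>k. l k = u k @ [y k]"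
    and unmarked: "\<forall>k. \<forall>b\<in>set (u k). b \<notin> B" and marked: "\<forall>k. y k \<in> B"
  shows "infinite {m. concat_word l m \<in> B}" and "concat_word l \<circ> enumerate {m. concat_word l m \<in> B} = y"
proof -
  have ne: "\<forall>k. l k \<noteq> []" by (simp add: l)
  define P where "P k = block_start l k + length (u k)" for k
  have wP: "concat_word l (P k) = y k" for k
  proof -
    have "length (u k) < length (l k)" "l k ! length (u k) = y k" by (simp_all add: l)
    with concat_word_nth[OF ne] show ?thesis by (simp add: P_def)
  qed
  have smP: "strict_mono P"
    unfolding strict_mono_Suc_iff by (simp add: P_def block_start_Suc l)
  have eq: "{m. concat_word l m \<in> B} = range P"
  proof (intro equalityI subsetI)
    fix m assume m: "m \<in> {m. concat_word l m \<in> B}"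
    obtain k q where kq: "q < length (l k)" "m = block_start l k + q"
      using block_startE[OF ne] by metis
    have "q = length (u k)"
    proof (rule ccontr)
      assume "q \<noteq> length (u k)"
      then have q: "q < length (u k)" using kq(1) by (simp add: l)
      have "concat_word l m = l k ! q" using concat_word_nth[OF ne kq(1)] kq(2) by simp
      also have "\<dots> = u k ! q" using q by (simp add: l nth_append)
      finally have "concat_word l m \<in> set (u k)" using q by simp
      then show False using m unmarked by blast
    qed
    then show "m \<in> range P" using kq by (simp add: P_def)
  next
    fix m assume "m \<in> range P"
    then show "m \<in> {m. concat_word l m \<in> B}" using wP marked by auto
  qed
  show "infinite {m. concat_word l m \<in> B}"
    unfolding eq using range_inj_infinite strict_mono_imp_inj_on[OF smP] by blast
  show "concat_word l \<circ> enumerate {m. concat_word l m \<in> B} = y"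
    unfolding eq enumerate_range_strict_mono[OF smP] using wP by (simp add: fun_eq_iff)
qed

lemma pigeonhole_seq:
  assumes "finite G" and "\<forall>m\<le>N. f m \<in> G" and "card G < Suc N"
  obtains a b where "a < b" "b \<le> N" "f a = f b"
proof -
  have "f ` {0..N} \<subseteq> G" using assms(2) by auto
  then have "card (f ` {0..N}) \<le> card G" using assms(1) by (simp add: card_mono)
  then have "card (f ` {0..N}) < card {0..N}" using assms(3) by simp
  then have "\<not> inj_on f {0..N}" by (rule pigeonhole)
  then obtain a b where ab: "a \<le> N" "b \<le> N" "a \<noteq> b" "f a = f b"
    unfolding inj_on_def by auto
  show ?thesis
  proof (cases "a < b")
    case False
    then show ?thesis using that[of b a] ab by simp
  qed (use that ab in blast)
qed

lemma finite_funs: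
  fixes n :: nat and F :: "nat \<Rightarrow> 'b set"
  assumes "\<forall>j<n. finite (F j)"
  shows "finite {g. (\<forall>j<n. g j \<in> F j) \<and> (\<forall>j\<ge>n. g j = d j)}" (is "finite ?X")
proof (rule inj_on_finite[of "\<lambda>g. map g [0..<n]"])
  show "inj_on (\<lambda>g. map g [0..<n]) ?X"
  proof (rule inj_onI, rule ext)
    fix g g' j assume "g \<in> ?X" "g' \<in> ?X" and eq: "map g [0..<n] = map g' [0..<n]"
    then show "g j = g' j"
      using nth_map_upt[of j n 0 g] nth_map_upt[of j n 0 g'] by (cases "j < n") auto
  qed
  show "finite {xs. set xs \<subseteq> (\<Union>j<n. F j) \<and> length xs = n}"
    by (rule finite_lists_length_eq) (use assms in auto)
qed fastforce

lemma finite_fsets: "finite X \<Longrightarrow> finite {M :: 'c fset. fset M \<subseteq> X}"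
  by (rule inj_on_finite[of fset _ "Pow X"]) (auto intro: inj_onI simp: fset_inject)

lemma gmove_det: "gmove t g g1 \<Longrightarrow> gmove t g g2 \<Longrightarrow> g1 = g2"
  unfolding gmove_def fun_eq_iff by (metis (mono_tags, lifting) option.case_eq_if case_prod_beta)


section \<open>Configurations and cuts\<close>

locale composition =
  fixes A :: "nat \<Rightarrow> ('a, 's) lts" and n :: nat
begin

definition wf_event :: "('a, 's) event \<Rightarrow> bool" where
  "wf_event e \<longleftrightarrow> (eact e, etr e) \<in> gtrans A n \<and> clabel ` ein e = preset (etr e)"

definition outputs :: "('a, 's) event set \<Rightarrow> ('a, 's) cond set" where
  "outputs S = \<Union>(eout ` S)"

definition inputs :: "('a, 's) event set \<Rightarrow> ('a, 's) cond set" where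
  "inputs S = \<Union>(ein ` S)"

definition marking :: "('a, 's) event set \<Rightarrow> ('a, 's) cond set" where
  "marking S = (M0 A n \<union> outputs S) - inputs S"

text \<open>Configurations: the second clause is causal closedness, the third conflict-freeness.\<close>

definition config :: "('a, 's) event set \<Rightarrow> bool" where
  "config S \<longleftrightarrow> finite S \<and> (\<forall>e\<in>S. wf_event e) \<and> (\<forall>e\<in>S. ein e \<subseteq> M0 A n \<union> outputs S)
     \<and> (\<forall>e\<in>S. \<forall>e'\<in>S. e \<noteq> e' \<longrightarrow> ein e \<inter> ein e' = {})"

definition fire :: "('a, 's) cond set \<Rightarrow> ('a, 's) event \<Rightarrow> ('a, 's) cond set" where
  "fire K e = (K - ein e) \<union> eout e"

fun firable :: "('a, 's) cond set \<Rightarrow> ('a, 's) event list \<Rightarrow> bool" where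
  "firable K [] \<longleftrightarrow> True"
| "firable K (e # es) \<longleftrightarrow> ein e \<subseteq> K \<and> firable (fire K e) es"

definition fire_seq :: "('a, 's) cond set \<Rightarrow> ('a, 's) event list \<Rightarrow> ('a, 's) cond set" where
  "fire_seq K es = foldl fire K es"

lemma fire_seq_Nil [simp]: "fire_seq K [] = K"
  by (simp add: fire_seq_def)

lemma fire_seq_Cons [simp]: "fire_seq K (e # es) = fire_seq (fire K e) es"
  by (simp add: fire_seq_def)

lemma firable_append: "firable K (xs @ ys) \<longleftrightarrow> firable K xs \<and> firable (fire_seq K xs) ys"
  by (induction xs arbitrary: K) auto

definition is_cut :: "('a, 's) cond set \<Rightarrow> bool" where
  "is_cut K \<longleftrightarrow> (\<forall>b\<in>K. fst (clabel b) < n) \<and> (\<forall>j<n. \<exists>!b. b \<in> K \<and> fst (clabel b) = j)"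

definition cond_at :: "('a, 's) cond set \<Rightarrow> nat \<Rightarrow> ('a, 's) cond" where
  "cond_at K j = (THE b. b \<in> K \<and> fst (clabel b) = j)"

text \<open>Beyond the components the value is that of ginit, so that cut states are global states.\<close>

definition cut_state :: "('a, 's) cond set \<Rightarrow> nat \<Rightarrow> 's" where
  "cut_state K j = (if j < n then snd (clabel (cond_at K j)) else lts_init (A j))"

lemma cond_at_in: "is_cut K \<Longrightarrow> j < n \<Longrightarrow> cond_at K j \<in> K \<and> fst (clabel (cond_at K j)) = j"
  unfolding cond_at_def is_cut_def by (rule theI') simp

lemma cond_at_eq: "is_cut K \<Longrightarrow> b \<in> K \<Longrightarrow> fst (clabel b) = j \<Longrightarrow> cond_at K j = b"
  unfolding cond_at_def is_cut_def by (rule the1_equality) auto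

lemma is_cut_M0: "is_cut (M0 A n)"
  unfolding is_cut_def
proof (intro conjI ballI allI impI)
  fix j assume "j < n"
  show "\<exists>!b. b \<in> M0 A n \<and> fst (clabel b) = j"
    by (rule ex1I[of _ "C0 j (lts_init (A j))"]) (use \<open>j < n\<close> in \<open>auto simp: M0_iff\<close>)
qed (auto simp: M0_iff)

lemma cut_state_M0: "cut_state (M0 A n) = ginit A"
proof
  fix j show "cut_state (M0 A n) j = ginit A j"
    using cond_at_eq[OF is_cut_M0, of "C0 j (lts_init (A j))" j]
    by (simp add: cut_state_def ginit_def M0_iff)
qed

lemma outputs_insert [simp]: "outputs (insert e S) = eout e \<union> outputs S"
  by (auto simp: outputs_def)

lemma inputs_insert [simp]: "inputs (insert e S) = ein e \<union> inputs S"
  by (auto simp: inputs_def)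

lemma marking_empty [simp]: "marking {} = M0 A n"
  by (simp add: marking_def outputs_def inputs_def)

lemma Cout_outputs: "Cout x j \<in> outputs S \<longleftrightarrow> x \<in> S \<and> etr x j \<noteq> None"
  by (auto simp: outputs_def Cout_eout)

lemma inputs_iff: "c \<in> inputs S \<longleftrightarrow> (\<exists>e\<in>S. c \<in> ein e)"
  by (auto simp: inputs_def)

lemma wf_event_idle_beyond: "wf_event e \<Longrightarrow> etr e j \<noteq> None \<Longrightarrow> j < n"
  unfolding wf_event_def gtrans_def by (cases "j < n") auto

lemma wf_event_ein_nonempty: "wf_event e \<Longrightarrow> ein e \<noteq> {}"
proof
  assume w: "wf_event e" and em: "ein e = {}"
  from w obtain j tr where "etr e j = Some tr" unfolding wf_event_def gtrans_def by blast
  then have "(j, fst tr) \<in> preset (etr e)" by (cases tr) (auto simp: preset_def)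
  with w em show False by (simp add: wf_event_def)
qed

lemma wf_event_input_label:
  "wf_event e \<Longrightarrow> c \<in> ein e \<Longrightarrow> \<exists>tr. etr e (fst (clabel c)) = Some tr \<and> snd (clabel c) = fst tr"
proof -
  assume "wf_event e" "c \<in> ein e"
  then have "clabel c \<in> preset (etr e)" by (auto simp: wf_event_def)
  then show ?thesis by (auto simp: preset_def)
qed

lemma wf_event_preset: "wf_event e \<Longrightarrow> etr e j = Some tr \<Longrightarrow> \<exists>c\<in>ein e. clabel c = (j, fst tr)"
proof -
  assume "wf_event e" "etr e j = Some tr"
  then have "(j, fst tr) \<in> clabel ` ein e"
    by (cases tr) (auto simp: preset_def wf_event_def)
  then show ?thesis by auto
qed

lemma wf_event_participates_iff: "wf_event e \<Longrightarrow> j < n \<Longrightarrow> etr e j \<noteq> None \<longleftrightarrow> eact e \<in> lts_acts (A j)"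
  unfolding wf_event_def gtrans_def by (auto split: if_splits)

lemma finite_eout: "wf_event e \<Longrightarrow> finite (eout e)"
proof -
  assume "wf_event e"
  then have "eout e \<subseteq> (\<lambda>j. Cout e j) ` {..<n}"
    using wf_event_idle_beyond by (auto simp: eout_def)
  then show ?thesis by (rule finite_subset) simp
qed

lemma ein_at_cut:
  assumes K: "is_cut K" and w: "wf_event e" and inp: "ein e \<subseteq> K"
  shows "c \<in> ein e \<longleftrightarrow> c \<in> K \<and> etr e (fst (clabel c)) \<noteq> None"
proof
  assume c: "c \<in> ein e"
  then show "c \<in> K \<and> etr e (fst (clabel c)) \<noteq> None"
    using inp wf_event_input_label[OF w c] by auto
next
  assume c: "c \<in> K \<and> etr e (fst (clabel c)) \<noteq> None"
  then obtain tr where tr: "etr e (fst (clabel c)) = Some tr" by auto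
  obtain c' where c': "c' \<in> ein e" "clabel c' = (fst (clabel c), fst tr)"
    using wf_event_preset[OF w tr] by blast
  have "c = cond_at K (fst (clabel c))" using cond_at_eq[OF K, of c] c by simp
  also have "\<dots> = c'" using cond_at_eq[OF K, of c'] c' inp by auto
  finally show "c \<in> ein e" using c' by simp
qed

lemma fire_at_cut:
  assumes K: "is_cut K" and w: "wf_event e" and inp: "ein e \<subseteq> K"
  shows "is_cut (fire K e)"
    and "j < n \<Longrightarrow> cond_at (fire K e) j = (if etr e j = None then cond_at K j else Cout e j)"
proof -
  have fire_iff: "b \<in> fire K e \<longleftrightarrow>
      (b \<in> K \<and> etr e (fst (clabel b)) = None) \<or> (\<exists>j. b = Cout e j \<and> etr e j \<noteq> None)" for b
    unfolding fire_def eout_def using ein_at_cut[OF K w inp, of b] by blast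
  have old: "b \<in> K \<Longrightarrow> fst (clabel b) = j \<Longrightarrow> b = cond_at K j" for b j
    using cond_at_eq[OF K] by simp
  have unique: "\<exists>!b. b \<in> fire K e \<and> fst (clabel b) = j" if j: "j < n" for j
  proof (cases "etr e j")
    case None
    show ?thesis
    proof (rule ex1I[of _ "cond_at K j"])
      show "cond_at K j \<in> fire K e \<and> fst (clabel (cond_at K j)) = j"
        using cond_at_in[OF K j] None fire_iff by simp
    qed (use None old fire_iff in force)
  next
    case (Some tr)
    show ?thesis
    proof (rule ex1I[of _ "Cout e j"])
      show "Cout e j \<in> fire K e \<and> fst (clabel (Cout e j)) = j"
        using Some fire_iff by simp
    qed (use Some fire_iff in force)
  qed
  have "fst (clabel b) < n" if "b \<in> fire K e" for b
    using that fire_iff K wf_event_idle_beyond[OF w] unfolding is_cut_def by force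
  then show cut: "is_cut (fire K e)"
    unfolding is_cut_def using unique by blast
  show "cond_at (fire K e) j = (if etr e j = None then cond_at K j else Cout e j)" if j: "j < n"
  proof (cases "etr e j")
    case None
    then show ?thesis using cond_at_eq[OF cut] cond_at_in[OF K j] fire_iff by simp
  next
    case (Some tr)
    then show ?thesis using cond_at_eq[OF cut, of "Cout e j" j] fire_iff by simp
  qed
qed

lemma fire_gmove:
  assumes K: "is_cut K" and w: "wf_event e" and inp: "ein e \<subseteq> K"
  shows "gmove (etr e) (cut_state K) (cut_state (fire K e))"
  unfolding gmove_def
proof
  fix j
  show "case etr e j of None \<Rightarrow> cut_state (fire K e) j = cut_state K j
        | Some (p, q) \<Rightarrow> cut_state K j = p \<and> cut_state (fire K e) j = q"
  proof (cases "etr e j")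
    case None
    then show ?thesis using fire_at_cut(2)[OF K w inp] by (simp add: cut_state_def)
  next
    case (Some tr)
    have j: "j < n" using wf_event_idle_beyond[OF w] Some by blast
    have "cond_at K j \<in> ein e"
      using ein_at_cut[OF K w inp] cond_at_in[OF K j] Some by simp
    then have "snd (clabel (cond_at K j)) = fst tr"
      using wf_event_input_label[OF w] cond_at_in[OF K j] Some by fastforce
    then show ?thesis
      using Some j fire_at_cut(2)[OF K w inp] by (auto simp: cut_state_def split: prod.split)
  qed
qed

lemma fire_gstep:
  "is_cut K \<Longrightarrow> wf_event e \<Longrightarrow> ein e \<subseteq> K \<Longrightarrow> gstep A n (cut_state K) (eact e) (cut_state (fire K e))"
  using fire_gmove unfolding gstep_def wf_event_def by blast

lemma firable_run:
  "is_cut K \<Longrightarrow> firable K \<rho> \<Longrightarrow> \<forall>e\<in>set \<rho>. wf_event e \<Longrightarrow>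
     is_cut (fire_seq K \<rho>) \<and> run (gstep A n) (cut_state K) (map eact \<rho>) (cut_state (fire_seq K \<rho>))"
proof (induction \<rho> arbitrary: K)
  case (Cons e \<rho>)
  then have "ein e \<subseteq> K" "wf_event e" by auto
  then have "is_cut (fire K e)" "gstep A n (cut_state K) (eact e) (cut_state (fire K e))"
    using fire_at_cut(1) fire_gstep Cons.prems(1) by auto
  then show ?case using Cons.IH[of "fire K e"] Cons.prems by auto
qed simp

lemma config_wf_event: "config S \<Longrightarrow> e \<in> S \<Longrightarrow> wf_event e"
  by (simp add: config_def)

lemma config_empty: "config {}"
  by (simp add: config_def)

lemma config_conflict_free: "config S \<Longrightarrow> x \<in> S \<Longrightarrow> y \<in> S \<Longrightarrow> x \<noteq> y \<Longrightarrow> ein x \<inter> ein y = {}"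
  unfolding config_def by blast

lemma input_from_dpred:
  assumes "c \<in> ein e" and "c \<in> M0 A n \<union> outputs S" and "\<And>y. y \<in> S \<Longrightarrow> (y, e) \<in> dpred \<Longrightarrow> y \<in> P"
  shows "c \<in> M0 A n \<union> outputs P"
  using assms(2)
proof
  assume "c \<in> outputs S"
  then obtain y j where y: "y \<in> S" "c = Cout y j" "etr y j \<noteq> None"
    by (auto simp: outputs_def eout_def)
  then have "(y, e) \<in> dpred" using assms(1) by (auto simp: dpred_iff)
  then have "y \<in> P" using assms(3) y(1) by blast
  then show ?thesis using y by (simp add: Cout_outputs)
qed simp

lemma config_dpred_closed: "config S \<Longrightarrow> e \<in> S \<Longrightarrow> (x, e) \<in> dpred \<Longrightarrow> x \<in> S"
proof -
  assume c: "config S" and e: "e \<in> S" and d: "(x, e) \<in> dpred"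
  then obtain j where "Cout x j \<in> ein e" by (auto simp: dpred_iff)
  moreover have "ein e \<subseteq> M0 A n \<union> outputs S" using c e by (simp add: config_def)
  ultimately show ?thesis by (auto simp: Cout_outputs Cout_notin_M0)
qed

lemma config_past_subset: "config S \<Longrightarrow> e \<in> S \<Longrightarrow> past e \<subseteq> S"
proof
  fix x assume c: "config S" and e: "e \<in> S" and "x \<in> past e"
  then have "(x, e) \<in> dpred\<^sup>*" by (simp add: past_def)
  then show "x \<in> S"
  proof (induction rule: converse_rtrancl_induct)
    case (step y z)
    then show ?case using config_dpred_closed[OF c] by blast
  qed (rule e)
qed

lemma config_subset:
  assumes c: "config S" and sub: "P \<subseteq> S" and closed: "\<And>e x. e \<in> P \<Longrightarrow> (x, e) \<in> dpred \<Longrightarrow> x \<in> P"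
  shows "config P"
proof -
  have "ein e \<subseteq> M0 A n \<union> outputs P" if "e \<in> P" for e
  proof
    fix b assume b: "b \<in> ein e"
    have "b \<in> M0 A n \<union> outputs S" using c b that sub unfolding config_def by blast
    then show "b \<in> M0 A n \<union> outputs P"
      using input_from_dpred[OF b] closed[OF that] by blast
  qed
  moreover have "finite P" using c sub finite_subset unfolding config_def by blast
  moreover have "\<forall>e\<in>P. wf_event e" using c sub unfolding config_def by blast
  moreover have "\<forall>e\<in>P. \<forall>e'\<in>P. e \<noteq> e' \<longrightarrow> ein e \<inter> ein e' = {}"
    using c sub unfolding config_def by blast
  ultimately show ?thesis unfolding config_def by blast
qed

lemma config_past: "config S \<Longrightarrow> e \<in> S \<Longrightarrow> config (past e)"
proof -
  assume c: "config S" and e: "e \<in> S"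
  show "config (past e)"
    by (rule config_subset[OF c config_past_subset[OF c e]]) (rule dpred_past)
qed

lemma config_insert:
  assumes c: "config S" and w: "wf_event e" and inp: "ein e \<subseteq> marking S"
  shows "e \<notin> S \<and> config (insert e S) \<and> marking (insert e S) = fire (marking S) e"
proof -
  have disj: "ein e \<inter> inputs S = {}" using inp by (auto simp: marking_def)
  obtain c0 where "c0 \<in> ein e" using wf_event_ein_nonempty[OF w] by blast
  then have ni: "e \<notin> S" using disj inputs_iff by blast
  have "ein x \<inter> ein y = {}" if "x \<in> insert e S" "y \<in> insert e S" "x \<noteq> y" for x y
  proof (cases "x = e \<or> y = e")
    case True
    then show ?thesis using that disj by (auto simp: inputs_def)
  qed (use that config_conflict_free[OF c] in auto)
  moreover have "ein x \<subseteq> M0 A n \<union> outputs (insert e S)" if "x \<in> insert e S" for x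
  proof (cases "x = e")
    case True
    then show ?thesis using inp by (auto simp: marking_def)
  next
    case False
    then show ?thesis using that c by (auto simp: config_def)
  qed
  moreover have "finite (insert e S)" "\<forall>x\<in>insert e S. wf_event x" using c w by (auto simp: config_def)
  ultimately have cfg: "config (insert e S)" unfolding config_def by blast
  have "eout e \<inter> inputs S = {}"
  proof (rule ccontr)
    assume "eout e \<inter> inputs S \<noteq> {}"
    then obtain x j where x: "x \<in> S" "Cout e j \<in> ein x" by (auto simp: inputs_iff eout_def)
    then have "e \<in> S" using config_dpred_closed[OF c x(1)] by (auto simp: dpred_iff)
    then show False using ni by simp
  qed
  moreover have "eout e \<inter> ein e = {}" using Cout_not_in_ein by (auto simp: eout_def)
  ultimately have "marking (insert e S) = fire (marking S) e" by (auto simp: marking_def fire_def)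
  then show ?thesis using ni cfg by simp
qed

lemma minimal_event_enabled:
  assumes P: "config P" and Q: "config Q" and PQ: "P \<subseteq> Q" and m: "m \<in> Q - P"
    and min: "\<And>y. (y, m) \<in> dpred \<Longrightarrow> y \<notin> Q - P"
  shows "ein m \<subseteq> marking P"
proof
  fix b assume b: "b \<in> ein m"
  have "b \<in> M0 A n \<union> outputs Q" using b m Q unfolding config_def by blast
  moreover have "y \<in> P" if "y \<in> Q" "(y, m) \<in> dpred" for y
    using min[OF that(2)] that(1) by blast
  ultimately have "b \<in> M0 A n \<union> outputs P" using input_from_dpred[OF b] by blast
  moreover have "b \<notin> inputs P"
  proof
    assume "b \<in> inputs P"
    then obtain y where y: "y \<in> P" "b \<in> ein y" by (auto simp: inputs_iff)
    then have "y \<in> Q" "y \<noteq> m" using PQ m by auto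
    then have "ein y \<inter> ein m = {}" using Q m unfolding config_def by blast
    then show False using y b by blast
  qed
  ultimately show "b \<in> marking P" by (simp add: marking_def)
qed

lemma config_linearization:
  assumes "config P" "config Q" "P \<subseteq> Q"
  shows "\<exists>\<rho>. set \<rho> = Q - P \<and> distinct \<rho> \<and> firable (marking P) \<rho> \<and> fire_seq (marking P) \<rho> = marking Q"
  using assms
proof (induction "card (Q - P)" arbitrary: P)
  case 0
  have "finite (Q - P)" using 0 by (simp add: config_def)
  then have "Q - P = {}" using 0(1) card_0_eq by metis
  then have "Q = P" using 0 by blast
  then show ?case by (intro exI[of _ "[]"]) simp
next
  case (Suc k)
  then have "Q - P \<noteq> {}" by auto
  then obtain x where "x \<in> Q - P" by blast
  then obtain m where m: "m \<in> Q - P" and min: "\<And>y. (y, m) \<in> dpred \<Longrightarrow> y \<notin> Q - P"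
    using wfE_min[OF wf_dpred] by metis
  have inp: "ein m \<subseteq> marking P" using minimal_event_enabled[OF Suc.prems m min] .
  have w: "wf_event m" using m Suc.prems(2) config_wf_event by blast
  have ins: "m \<notin> P \<and> config (insert m P) \<and> marking (insert m P) = fire (marking P) m"
    using config_insert[OF Suc.prems(1) w inp] .
  have "Q - insert m P = (Q - P) - {m}" by blast
  then have card: "k = card (Q - insert m P)" using card_Diff_singleton[OF m] Suc.hyps(2) by simp
  obtain \<rho> where r: "set \<rho> = Q - insert m P" "distinct \<rho>" "firable (marking (insert m P)) \<rho>"
      "fire_seq (marking (insert m P)) \<rho> = marking Q"
    using Suc.hyps(1)[OF card] ins Suc.prems m by auto
  show ?case
    by (intro exI[of _ "m # \<rho>"]) (use r ins inp m in auto)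
qed

lemma config_cut_run:
  assumes P: "config P" and Q: "config Q" and "P \<subseteq> Q"
  shows "is_cut (marking Q)"
    and "\<exists>\<rho>. set \<rho> = Q - P \<and> distinct \<rho> \<and>
           run (gstep A n) (cut_state (marking P)) (map eact \<rho>) (cut_state (marking Q))"
proof -
  obtain \<sigma> where \<sigma>: "set \<sigma> = P" "firable (M0 A n) \<sigma>" "fire_seq (M0 A n) \<sigma> = marking P"
    using config_linearization[OF config_empty P] by auto
  have "\<forall>e\<in>set \<sigma>. wf_event e" using \<sigma>(1) P config_wf_event by blast
  then have cutP: "is_cut (marking P)" using firable_run[OF is_cut_M0 \<sigma>(2)] \<sigma>(3) by simp
  obtain \<rho> where \<rho>: "set \<rho> = Q - P" "distinct \<rho>" "firable (marking P) \<rho>"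
      "fire_seq (marking P) \<rho> = marking Q"
    using config_linearization[OF assms] by blast
  have "\<forall>e\<in>set \<rho>. wf_event e" using \<rho>(1) Q config_wf_event by blast
  then have "is_cut (marking Q) \<and>
      run (gstep A n) (cut_state (marking P)) (map eact \<rho>) (cut_state (marking Q))"
    using firable_run[OF cutP \<rho>(3)] \<rho>(4) by simp
  then show "is_cut (marking Q)"
    and "\<exists>\<rho>. set \<rho> = Q - P \<and> distinct \<rho> \<and>
           run (gstep A n) (cut_state (marking P)) (map eact \<rho>) (cut_state (marking Q))"
    using \<rho>(1,2) by blast+
qed

lemma config_cut: "config S \<Longrightarrow> is_cut (marking S)"
  using config_cut_run(1)[OF config_empty] by blast

lemma config_run:
  "config S \<Longrightarrow> \<exists>\<rho>. set \<rho> = S \<and> distinct \<rho> \<and> run (gstep A n) (ginit A) (map eact \<rho>) (cut_state (marking S))"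
  using config_cut_run(2)[OF config_empty] by (simp add: cut_state_M0)

lemma Mark_eq: "Mark A n e = marking (past e)"
  by (simp add: Mark_def marking_def outputs_def inputs_def)

lemma Mj_eq: "Mj A n e j = cond_at (Mark A n e) j"
  by (simp add: Mj_def cond_at_def)

lemma St_eq_iff: "St A n e = St A n e' \<longleftrightarrow> cut_state (Mark A n e) = cut_state (Mark A n e')"
proof -
  have "St A n e j = (if j < n then cut_state (Mark A n e) j else undefined)" for e j
    by (simp add: St_def cut_state_def Mj_eq)
  then show ?thesis unfolding fun_eq_iff by (metis cut_state_def)
qed

lemma Cout_in_past_marking: "etr e j \<noteq> None \<Longrightarrow> Cout e j \<in> marking (past e)"
  using past_self dpred_not_from_past
  by (auto simp: marking_def Cout_outputs inputs_iff dpred_iff)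

lemma cond_at_past:
  assumes "config (past e)" and "etr e j \<noteq> None"
  shows "cond_at (marking (past e)) j = Cout e j"
  using cond_at_eq[OF config_cut[OF assms(1)] Cout_in_past_marking[OF assms(2)]] by simp

lemma reach_config: "reach A n E K \<Longrightarrow> \<forall>e\<in>E. wf_event e \<Longrightarrow> \<exists>S. config S \<and> S \<subseteq> E \<and> K = marking S"
proof (induction rule: reach.induct)
  case 1
  then show ?case using config_empty by (intro exI[of _ "{}"]) simp
next
  case (2 K e)
  then obtain S where S: "config S" "S \<subseteq> E" "K = marking S" by blast
  have w: "wf_event e" using 2 by blast
  have "e \<notin> S \<and> config (insert e S) \<and> marking (insert e S) = fire (marking S) e"
    using config_insert[OF S(1) w] 2 S by simp
  then show ?case using S 2 by (intro exI[of _ "insert e S"]) (auto simp: fire_def)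
qed

lemma firable_reach: "reach A n E K \<Longrightarrow> firable K \<rho> \<Longrightarrow> set \<rho> \<subseteq> E \<Longrightarrow> reach A n E (fire_seq K \<rho>)"
proof (induction \<rho> arbitrary: K)
  case (Cons e \<rho>)
  have "reach A n E (fire K e)" unfolding fire_def
    using reach.intros(2)[OF Cons.prems(1)] Cons.prems by simp
  then show ?case using Cons by simp
qed simp

lemma config_reach: "config S \<Longrightarrow> S \<subseteq> E \<Longrightarrow> reach A n E (marking S)"
proof -
  assume c: "config S" "S \<subseteq> E"
  obtain \<rho> where "set \<rho> = S" "firable (M0 A n) \<rho>" "fire_seq (M0 A n) \<rho> = marking S"
    using config_linearization[OF config_empty c(1)] by auto
  then show ?thesis using firable_reach[of E "M0 A n" \<rho>] reach.intros(1) c by auto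
qed

end


section \<open>Projection onto the interface\<close>

locale interface = composition A n for A :: "nat \<Rightarrow> ('a, 's) lts" and n :: nat +
  fixes i :: nat
begin

abbreviation iacts :: "'a set" where "iacts \<equiv> lts_acts (A i)"

definition istep :: "(nat \<Rightarrow> 's) \<Rightarrow> 'a \<Rightarrow> (nat \<Rightarrow> 's) \<Rightarrow> bool" where
  "istep g a g' \<longleftrightarrow> a \<in> iacts \<and> (\<exists>u. (\<forall>b\<in>set u. b \<notin> iacts) \<and> run (gstep A n) g (u @ [a]) g')"

lemma run_istep_filter:
  "run (gstep A n) g xs g' \<Longrightarrow>
     \<exists>h. run istep g (filter (\<lambda>a. a \<in> iacts) xs) h \<and>
         (\<exists>v. (\<forall>b\<in>set v. b \<notin> iacts) \<and> run (gstep A n) h v g')"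
proof (induction xs arbitrary: g' rule: rev_induct)
  case (snoc a xs)
  then obtain g1 where g1: "run (gstep A n) g xs g1" "gstep A n g1 a g'" by (auto simp: run_snoc)
  then obtain h v where h: "run istep g (filter (\<lambda>a. a \<in> iacts) xs) h"
      "\<forall>b\<in>set v. b \<notin> iacts" "run (gstep A n) h v g1"
    using snoc.IH by blast
  show ?case
  proof (cases "a \<in> iacts")
    case True
    then have "istep h a g'" using h(2,3) g1(2) by (auto simp: istep_def run_snoc)
    then show ?thesis using h(1) True by (intro exI[of _ g']) (auto simp: run_snoc intro: exI[of _ "[]"])
  next
    case False
    then show ?thesis using h g1(2) by (intro exI[of _ h] conjI exI[of _ "v @ [a]"]) (auto simp: run_snoc)
  qed
qed (auto intro: exI[of _ "[]"])

lemma istep_run_unfilter: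
  "run istep g ys h \<Longrightarrow> \<exists>xs. filter (\<lambda>a. a \<in> iacts) xs = ys \<and> run (gstep A n) g xs h"
proof (induction ys arbitrary: g)
  case Nil
  then show ?case by (intro exI[of _ "[]"]) simp
next
  case (Cons a ys)
  then obtain g1 where g1: "istep g a g1" "run istep g1 ys h" by auto
  then obtain u where u: "a \<in> iacts" "\<forall>b\<in>set u. b \<notin> iacts" "run (gstep A n) g (u @ [a]) g1"
    by (auto simp: istep_def)
  obtain xs where xs: "filter (\<lambda>a. a \<in> iacts) xs = ys" "run (gstep A n) g1 xs h"
    using Cons.IH g1 by blast
  have "filter (\<lambda>a. a \<in> iacts) (u @ [a] @ xs) = a # ys" using u xs by (simp add: filter_empty_conv)
  moreover have "run (gstep A n) g ((u @ [a]) @ xs) h" using u xs run_append by metis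
  ultimately show ?case by (intro exI[of _ "u @ [a] @ xs"]) simp
qed

lemma gstep_run_istep_trace:
  assumes st: "\<forall>k. gstep A n (s k) (w k) (s (Suc k))" and inf: "infinite {k. w k \<in> iacts}"
  shows "Inf (w \<circ> enumerate {k. w k \<in> iacts}) \<in> traces_of (s 0) istep"
proof -
  let ?S = "{k. w k \<in> iacts}"
  let ?en = "enumerate ?S"
  define start where "start k = (case k of 0 \<Rightarrow> 0 | Suc k' \<Rightarrow> Suc (?en k'))" for k
  have sm: "strict_mono ?en" using strict_mono_enumerate[OF inf] .
  have start_le: "start k \<le> ?en k" for k
    using sm by (cases k) (auto simp: start_def strict_mono_def Suc_leI)
  have invisible: "w m \<notin> iacts" if "start k \<le> m" "m < ?en k" for k m
  proof
    assume "w m \<in> iacts"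
    then obtain j where j: "m = ?en j" using range_enumerate[OF inf] by blast
    then have "j < k" using that(2) sm by (simp add: strict_mono_less)
    then obtain k' where k': "k = Suc k'" "j \<le> k'" by (cases k) auto
    then have "?en j \<le> ?en k'" using sm by (simp add: strict_mono_less_eq)
    then show False using that(1) j k'(1) by (simp add: start_def)
  qed
  have "istep (s (start k)) (w (?en k)) (s (start (Suc k)))" for k
  proof -
    let ?u = "map w [start k..<?en k]"
    have "run (gstep A n) (s (start k)) (map w [start k..<Suc (?en k)]) (s (Suc (?en k)))"
      using run_of_states[of "start k" "Suc (?en k)" "gstep A n" s w] st start_le[of k] by simp
    moreover have "map w [start k..<Suc (?en k)] = ?u @ [w (?en k)]"
      using start_le[of k] by simp
    moreover have "start (Suc k) = Suc (?en k)" by (simp add: start_def)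
    ultimately have "run (gstep A n) (s (start k)) (?u @ [w (?en k)]) (s (start (Suc k)))"
      by simp
    moreover have "\<forall>b\<in>set ?u. b \<notin> iacts" using invisible by auto
    moreover have "w (?en k) \<in> iacts" using enumerate_in_set[OF inf] by simp
    ultimately show ?thesis unfolding istep_def by blast
  qed
  moreover have "start 0 = 0" by (simp add: start_def)
  ultimately show ?thesis unfolding traces_Inf by (intro exI[of _ "\<lambda>k. s (start k)"]) auto
qed

lemma istep_run_gstep_run:
  assumes st: "\<forall>k. istep (h k) (ys k) (h (Suc k))"
  shows "\<exists>s w. s 0 = h 0 \<and> (\<forall>m. gstep A n (s m) (w m) (s (Suc m)))
           \<and> infinite {m. w m \<in> iacts} \<and> w \<circ> enumerate {m. w m \<in> iacts} = ys"
proof -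
  obtain u where u: "\<And>k. (\<forall>b\<in>set (u k). b \<notin> iacts) \<and> run (gstep A n) (h k) (u k @ [ys k]) (h (Suc k))"
    using st unfolding istep_def by metis
  have "\<forall>k. ys k \<in> iacts" using st by (simp add: istep_def)
  then have "infinite {m. concat_word (\<lambda>k. u k @ [ys k]) m \<in> iacts}"
    "concat_word (\<lambda>k. u k @ [ys k]) \<circ> enumerate {m. concat_word (\<lambda>k. u k @ [ys k]) m \<in> iacts} = ys"
    using concat_word_marked_positions[of "\<lambda>k. u k @ [ys k]" u ys iacts] u by simp_all
  moreover have "\<forall>k. run (gstep A n) (h k) (u k @ [ys k]) (h (Suc k))" using u by blast
  then obtain s where "s 0 = h 0" "\<forall>m. gstep A n (s m) (concat_word (\<lambda>k. u k @ [ys k]) m) (s (Suc m))"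
    using run_concat_word[of "\<lambda>k. u k @ [ys k]" "gstep A n" h] by auto
  ultimately show ?thesis by blast
qed

end

section \<open>An invariant of Algorithm 1\<close>

context interface
begin

definition companion_conds :: "(('a, 's) event \<times> ('a, 's) event) set \<Rightarrow> (('a, 's) cond \<times> ('a, 's) cond) set" where
  "companion_conds cp = {(Cout c i, Cout c' i) | c c'. (c, c') \<in> cp}"

abbreviation linked :: "(('a, 's) event \<times> ('a, 's) event) set \<Rightarrow> (('a, 's) cond \<times> ('a, 's) cond) set" where
  "linked cp \<equiv> (companion_conds cp \<union> (companion_conds cp)\<inverse>)\<^sup>*"

text \<open>The i-events that are not cut-offs have pairwise different global states (which bounds the
  net), and every cut-off is linked through companion pairs to such an event (which lets the folding
  replace a cut-off by a representative that the algorithm did extend).\<close>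

definition alg_inv :: "('a, 's) event set \<Rightarrow> (('a, 's) event \<times> ('a, 's) event) set \<Rightarrow> bool" where
  "alg_inv E cp \<longleftrightarrow> finite E \<and> bp A n E
    \<and> (\<forall>e\<in>E. wf_event e \<and> config (past e) \<and> past e \<subseteq> E)
    \<and> (\<forall>c c'. (c, c') \<in> cp \<longrightarrow> c \<in> E \<and> c' \<in> E \<and> ievent i c \<and> ievent i c' \<and> St A n c = St A n c')
    \<and> (\<forall>e\<in>E. \<forall>x. causal_less x e \<longrightarrow> x \<notin> fst ` cp)
    \<and> inj_on (St A n) {x \<in> E. x \<notin> fst ` cp \<and> ievent i x}
    \<and> (\<forall>c\<in>fst ` cp. \<exists>c'\<in>E. c' \<notin> fst ` cp \<and> ievent i c' \<and> St A n c' = St A n c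
          \<and> (Cout c i, Cout c' i) \<in> linked cp)"

lemma alg_invD:
  assumes "alg_inv E cp"
  shows "finite E" and "bp A n E"
    and "e \<in> E \<Longrightarrow> wf_event e" and "e \<in> E \<Longrightarrow> config (past e)" and "e \<in> E \<Longrightarrow> past e \<subseteq> E"
    and "(c, c') \<in> cp \<Longrightarrow> c \<in> E \<and> c' \<in> E \<and> ievent i c \<and> ievent i c' \<and> St A n c = St A n c'"
    and "e \<in> E \<Longrightarrow> causal_less x e \<Longrightarrow> x \<notin> fst ` cp"
    and "inj_on (St A n) {x \<in> E. x \<notin> fst ` cp \<and> ievent i x}"
    and "c \<in> fst ` cp \<Longrightarrow> \<exists>c'\<in>E. c' \<notin> fst ` cp \<and> ievent i c' \<and> St A n c' = St A n c
          \<and> (Cout c i, Cout c' i) \<in> linked cp"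
  using assms unfolding alg_inv_def by blast+

lemma alg_inv_empty: "alg_inv {} {}"
  by (simp add: alg_inv_def bp.intros(1))

lemma allowed_ext_facts:
  assumes I: "alg_inv E cp" and ae: "allowed_ext A n (E, cp) e"
  shows "e \<notin> E" and "wf_event e" and "config (past e)" and "past e \<subseteq> insert e E"
    and "bp A n (insert e E)"
proof -
  have pe: "pext A n E e" using ae by (simp add: allowed_ext_def)
  then show "e \<notin> E" and w: "wf_event e" by (auto simp: pext_def wf_event_def)
  from pe obtain K where K: "reach A n E K" "ein e \<subseteq> K" by (auto simp: pext_def)
  have "\<forall>x\<in>E. wf_event x" using I by (simp add: alg_inv_def)
  then obtain S where S: "config S" "S \<subseteq> E" "K = marking S" using reach_config[OF K(1)] by blast
  then have "config (insert e S)" using config_insert[OF S(1) w] K by simp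
  then show "config (past e)" and "past e \<subseteq> insert e E"
    using config_past config_past_subset S(2) by blast+
  show "bp A n (insert e E)" using I pe by (simp add: alg_inv_def bp.intros(2))
qed

lemma alg_inv_insert_events:
  assumes I: "alg_inv E cp" and ae: "allowed_ext A n (E, cp) e"
  shows "\<forall>x\<in>insert e E. wf_event x \<and> config (past x) \<and> past x \<subseteq> insert e E"
  using I allowed_ext_facts[OF I ae] by (auto simp: alg_inv_def)

lemma alg_inv_insert_plain:
  assumes I: "alg_inv E cp" and ae: "allowed_ext A n (E, cp) e"
    and nc: "\<not> (\<exists>e'. is_companion A n i E e e')"
  shows "alg_inv (insert e E) cp"
proof -
  let ?NC = "\<lambda>E. {x \<in> E. x \<notin> fst ` cp \<and> ievent i x}"
  have eE: "e \<notin> E" using allowed_ext_facts(1)[OF I ae] .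
  have "inj_on (St A n) (?NC (insert e E))"
  proof (cases "ievent i e \<and> e \<notin> fst ` cp")
    case True
    have "St A n e \<notin> St A n ` ?NC E"
      using nc True eE by (auto simp: is_companion_def)
    moreover have "?NC (insert e E) = insert e (?NC E)" using True by auto
    ultimately show ?thesis using I eE by (simp add: alg_inv_def)
  next
    case False
    then have "?NC (insert e E) = ?NC E" by auto
    then show ?thesis using I by (simp add: alg_inv_def)
  qed
  moreover have "\<forall>x\<in>insert e E. \<forall>y. causal_less y x \<longrightarrow> y \<notin> fst ` cp"
    using I ae by (auto simp: alg_inv_def allowed_ext_def)
  moreover have "finite (insert e E)" using I by (simp add: alg_inv_def)
  moreover have "\<forall>c c'. (c, c') \<in> cp \<longrightarrow> c \<in> insert e E \<and> c' \<in> insert e E \<and> ievent i c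
      \<and> ievent i c' \<and> St A n c = St A n c'"
    using I by (simp add: alg_inv_def)
  moreover have "\<forall>c\<in>fst ` cp. \<exists>c'\<in>insert e E. c' \<notin> fst ` cp \<and> ievent i c' \<and> St A n c' = St A n c
      \<and> (Cout c i, Cout c' i) \<in> linked cp"
    using I unfolding alg_inv_def by blast
  ultimately show ?thesis
    using alg_inv_insert_events[OF I ae] allowed_ext_facts(5)[OF I ae]
    unfolding alg_inv_def by blast
qed

lemma linked_insert_cutoff:
  assumes I: "alg_inv E cp" and eE: "e \<notin> E" and comp: "is_companion A n i E e e'"
    and c: "c \<in> fst ` insert (e, e') cp"
  shows "\<exists>c'\<in>insert e E. c' \<notin> fst ` insert (e, e') cp \<and> ievent i c' \<and> St A n c' = St A n c
           \<and> (Cout c i, Cout c' i) \<in> linked (insert (e, e') cp)"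
proof -
  let ?cp = "insert (e, e') cp"
  from comp have e'E: "e' \<in> E" and ie': "ievent i e'" and ste: "St A n e = St A n e'"
    by (auto simp: is_companion_def)
  have mono: "linked cp \<subseteq> linked ?cp"
    by (rule rtrancl_mono) (auto simp: companion_conds_def)
  have new: "(Cout e i, Cout e' i) \<in> companion_conds ?cp" by (auto simp: companion_conds_def)
  show ?thesis
  proof (cases "c = e")
    case False
    then obtain c' where c': "c' \<in> E" "c' \<notin> fst ` cp" "ievent i c'" "St A n c' = St A n c"
        "(Cout c i, Cout c' i) \<in> linked cp"
      using alg_invD(9)[OF I] c by auto
    then show ?thesis using eE mono by (intro bexI[of _ c']) auto
  next
    case True
    show ?thesis
    proof (cases "e' \<in> fst ` cp")
      case False
      then show ?thesis using True e'E eE ie' ste new by (intro bexI[of _ e']) auto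
    next
      case e'C: True
      then obtain c' where c': "c' \<in> E" "c' \<notin> fst ` cp" "ievent i c'" "St A n c' = St A n e'"
          "(Cout e' i, Cout c' i) \<in> linked cp"
        using alg_invD(9)[OF I] by blast
      have "(Cout e i, Cout c' i) \<in> linked ?cp"
        using new c'(5) mono by (meson UnI1 converse_rtrancl_into_rtrancl subsetD)
      then show ?thesis using True c' ste eE by (intro bexI[of _ c']) auto
    qed
  qed
qed

lemma alg_inv_insert_cutoff:
  assumes I: "alg_inv E cp" and ae: "allowed_ext A n (E, cp) e"
    and comp: "is_companion A n i E e e'"
  shows "alg_inv (insert e E) (insert (e, e') cp)"
proof -
  let ?cp = "insert (e, e') cp"
  have eE: "e \<notin> E" using allowed_ext_facts(1)[OF I ae] .
  from comp have ie: "ievent i e" and e'E: "e' \<in> E" and ie': "ievent i e'"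
    and ste: "St A n e = St A n e'" by (auto simp: is_companion_def)
  have pairs: "\<forall>c c'. (c, c') \<in> ?cp \<longrightarrow> c \<in> insert e E \<and> c' \<in> insert e E \<and> ievent i c
      \<and> ievent i c' \<and> St A n c = St A n c'"
    using I ie ie' e'E ste by (auto simp: alg_inv_def)
  have preds: "\<forall>x\<in>insert e E. \<forall>y. causal_less y x \<longrightarrow> y \<notin> fst ` ?cp"
  proof (intro ballI allI impI)
    fix x y assume x: "x \<in> insert e E" and cl: "causal_less y x"
    have "y \<notin> fst ` cp"
    proof (cases "x = e")
      case True
      then show ?thesis using ae cl by (simp add: allowed_ext_def)
    next
      case False
      then show ?thesis using I x cl unfolding alg_inv_def by blast
    qed
    moreover have "y \<noteq> e"
    proof
      assume "y = e"
      then have "x \<noteq> e" using cl causal_less_irrefl by blast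
      then have "past x \<subseteq> E" using x I by (simp add: alg_inv_def)
      then show False using causal_less_past[OF cl] \<open>y = e\<close> eE by blast
    qed
    ultimately show "y \<notin> fst ` ?cp" by simp
  qed
  have "{x \<in> insert e E. x \<notin> fst ` ?cp \<and> ievent i x} \<subseteq> {x \<in> E. x \<notin> fst ` cp \<and> ievent i x}"
    by auto
  then have inj: "inj_on (St A n) {x \<in> insert e E. x \<notin> fst ` ?cp \<and> ievent i x}"
    using I inj_on_subset by (auto simp: alg_inv_def)
  have chain: "\<forall>c\<in>fst ` ?cp. \<exists>c'\<in>insert e E. c' \<notin> fst ` ?cp \<and> ievent i c'
      \<and> St A n c' = St A n c \<and> (Cout c i, Cout c' i) \<in> linked ?cp"
    using linked_insert_cutoff[OF I eE comp] by blast
  have "finite (insert e E)" using I by (simp add: alg_inv_def)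
  then show ?thesis
    using alg_inv_insert_events[OF I ae] allowed_ext_facts(5)[OF I ae] pairs preds inj chain
    unfolding alg_inv_def by blast
qed

lemma alg_inv_step:
  assumes I: "alg_inv E cp" and st: "alg_step A n i (E, cp) s'"
  shows "alg_inv (fst s') (snd s')" and "\<exists>e. e \<notin> E \<and> fst s' = insert e E"
proof -
  from st obtain e where ae: "allowed_ext A n (E, cp) e" and E': "fst s' = insert e E"
    and cases: "(\<not> (\<exists>e'. is_companion A n i E e e') \<and> snd s' = cp)
       \<or> (\<exists>e'. is_companion A n i E e e' \<and> snd s' = insert (e, e') cp)"
    unfolding alg_step_def by auto
  show "\<exists>e. e \<notin> E \<and> fst s' = insert e E" using E' allowed_ext_facts(1)[OF I ae] by blast
  show "alg_inv (fst s') (snd s')"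
    using cases alg_inv_insert_plain[OF I ae] alg_inv_insert_cutoff[OF I ae] E' by auto
qed

lemma alg_inv_reachable: "(alg_step A n i)\<^sup>*\<^sup>* ({}, {}) s \<Longrightarrow> alg_inv (fst s) (snd s)"
proof (induction rule: rtranclp_induct)
  case (step y z)
  then show ?case using alg_inv_step(1)[of "fst y" "snd y" z] by simp
qed (simp add: alg_inv_empty)

end

context interface
begin

lemma istep_traces_subset_proj: "traces_of (ginit A) istep \<subseteq> proj iacts ` TrPar A n"
proof
  fix y assume y: "y \<in> traces_of (ginit A) istep"
  show "y \<in> proj iacts ` TrPar A n"
  proof (cases y)
    case (Fin ys)
    then obtain h where "run istep (ginit A) ys h" using y traces_Fin by metis
    then obtain xs where xs: "filter (\<lambda>a. a \<in> iacts) xs = ys" "run (gstep A n) (ginit A) xs h"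
      using istep_run_unfilter by blast
    have "Fin xs \<in> TrPar A n" unfolding TrPar_def traces_Fin using xs by blast
    moreover have "proj iacts (Fin xs) = y" using xs Fin by simp
    ultimately show ?thesis by (metis image_eqI)
  next
    case (Inf ys)
    then obtain h where h: "h 0 = ginit A" "\<forall>k. istep (h k) (ys k) (h (Suc k))"
      using y traces_Inf by metis
    obtain s w where sw: "s 0 = h 0" "\<forall>m. gstep A n (s m) (w m) (s (Suc m))"
      "infinite {m. w m \<in> iacts}" "w \<circ> enumerate {m. w m \<in> iacts} = ys"
      using istep_run_gstep_run[OF h(2)] by blast
    have "Inf w \<in> TrPar A n" unfolding TrPar_def traces_Inf using sw h by metis
    moreover have "proj iacts (Inf w) = y" using sw Inf by simp
    ultimately show ?thesis by (metis image_eqI)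
  qed
qed

end


section \<open>Termination of Algorithm 1\<close>

locale nondivergent = interface A n i for A :: "nat \<Rightarrow> ('a, 's) lts" and n i +
  assumes fin: "\<forall>j<n. finite_lts (A j)" and iface: "i < n" and nondiv: "\<not> divergent A n i"
begin

lemma proj_TrPar_subset_istep_traces: "proj iacts ` TrPar A n \<subseteq> traces_of (ginit A) istep"
proof
  fix y assume "y \<in> proj iacts ` TrPar A n"
  then obtain x where x: "x \<in> TrPar A n" "y = proj iacts x" by blast
  show "y \<in> traces_of (ginit A) istep"
  proof (cases x)
    case (Fin xs)
    then obtain g where "run (gstep A n) (ginit A) xs g" using x traces_Fin unfolding TrPar_def by metis
    then obtain h where "run istep (ginit A) (filter (\<lambda>a. a \<in> iacts) xs) h"
      using run_istep_filter by blast
    then show ?thesis using x Fin traces_Fin by fastforce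
  next
    case (Inf w)
    then obtain s where s: "s 0 = ginit A" "\<forall>k. gstep A n (s k) (w k) (s (Suc k))"
      using x traces_Inf unfolding TrPar_def by metis
    have inf: "infinite {k. w k \<in> iacts}"
      using nondiv x Inf unfolding divergent_def by blast
    have "Inf (w \<circ> enumerate {k. w k \<in> iacts}) \<in> traces_of (s 0) istep"
      by (rule gstep_run_istep_trace[OF s(2) inf])
    then show ?thesis using x Inf inf s(1) by simp
  qed
qed

definition gstates :: "(nat \<Rightarrow> 's) set" where
  "gstates = {g. (\<forall>j<n. g j \<in> lts_states (A j)) \<and> (\<forall>j\<ge>n. g j = lts_init (A j))}"

lemma finite_gstates: "finite gstates"
  unfolding gstates_def by (rule finite_funs) (use fin in \<open>auto simp: finite_lts_def\<close>)

lemma ginit_gstates: "ginit A \<in> gstates"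
  using fin by (auto simp: gstates_def ginit_def finite_lts_def)

lemma gstep_gstates:
  assumes st: "gstep A n g a g'" and g: "g \<in> gstates"
  shows "g' \<in> gstates"
proof -
  obtain t where t: "(a, t) \<in> gtrans A n" "gmove t g g'" using st by (auto simp: gstep_def)
  have mv: "case t j of None \<Rightarrow> g' j = g j | Some (p, q) \<Rightarrow> g j = p \<and> g' j = q" for j
    using t(2) by (simp add: gmove_def)
  have "g' j \<in> lts_states (A j)" if j: "j < n" for j
  proof (cases "t j")
    case None
    then show ?thesis using mv[of j] g j by (simp add: gstates_def)
  next
    case (Some tr)
    have "if a \<in> lts_acts (A j) then \<exists>tr. t j = Some tr \<and> tr \<in> lts_trans (A j) \<and> lts_lab (A j) tr = a
        else t j = None"
      using t(1) j unfolding gtrans_def by blast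
    then have "tr \<in> lts_trans (A j)" using Some by (cases "a \<in> lts_acts (A j)") auto
    moreover have "lts_trans (A j) \<subseteq> lts_states (A j) \<times> lts_states (A j)"
      using fin j by (simp add: finite_lts_def)
    ultimately have "snd tr \<in> lts_states (A j)" by (cases tr) auto
    then show ?thesis using mv[of j] Some by (cases tr) simp
  qed
  moreover have "g' j = lts_init (A j)" if "n \<le> j" for j
  proof -
    have "t j = None" using t(1) that unfolding gtrans_def by auto
    then show ?thesis using mv[of j] g that by (simp add: gstates_def)
  qed
  ultimately show "g' \<in> gstates" by (simp add: gstates_def)
qed

lemma run_gstates: "run (gstep A n) g xs g' \<Longrightarrow> g \<in> gstates \<Longrightarrow> g' \<in> gstates"
  by (induction xs arbitrary: g) (auto intro: gstep_gstates)

lemma config_gstates: "config S \<Longrightarrow> cut_state (marking S) \<in> gstates"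
  using config_run run_gstates ginit_gstates by blast

text \<open>A longer stretch revisits a global state, and pumping its loop gives a divergent trace.\<close>

lemma invisible_run_bound:
  assumes p: "run (gstep A n) (ginit A) (p @ xs) g" and invisible: "\<forall>a\<in>set xs. a \<notin> iacts"
  shows "length xs \<le> card gstates"
proof (rule ccontr)
  assume big: "\<not> length xs \<le> card gstates"
  let ?w = "(!) (p @ xs)"
  obtain s where s: "s 0 = ginit A" "\<forall>k<length (p @ xs). gstep A n (s k) (?w k) (s (Suc k))"
    using run_states[OF p] by blast
  have "s k \<in> gstates" if "k \<le> length (p @ xs)" for k
    using that
  proof (induction k)
    case (Suc k)
    then have "k < length (p @ xs)" by simp
    then show ?case using gstep_gstates[OF s(2)[rule_format]] Suc by simp
  qed (simp add: s(1) ginit_gstates)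
  then have "\<forall>m\<le>length xs. s (length p + m) \<in> gstates" by simp
  moreover have "card gstates < Suc (length xs)" using big by simp
  ultimately obtain a b where ab: "a < b" "b \<le> length xs" "s (length p + a) = s (length p + b)"
    by (rule pigeonhole_seq[OF finite_gstates])
  let ?a = "length p + a" and ?b = "length p + b"
  have steps: "\<forall>k. 0 \<le> k \<and> k < ?b \<longrightarrow> gstep A n (s k) (?w k) (s (Suc k))"
    using s(2) ab by auto
  have stem: "run (gstep A n) (ginit A) (map ?w [0..<?a]) (s ?a)"
    using run_of_states[of 0 ?a "gstep A n" s ?w] steps s(1) ab by simp
  have loop: "run (gstep A n) (s ?a) (map ?w [?a..<?b]) (s ?a)"
    using run_of_states[of ?a ?b "gstep A n" s ?w] steps ab by simp
  obtain w where w: "Inf w \<in> TrPar A n" "\<forall>m \<ge> ?a + (b - a). w m \<in> set (map ?w [?a..<?b])"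
    using lasso_trace[OF stem loop] ab unfolding TrPar_def by auto
  have "set (map ?w [?a..<?b]) \<subseteq> set xs" using ab by (auto simp: nth_append)
  then have "w k \<notin> iacts" if "?a + (b - a) \<le> k" for k
    using w(2) that invisible by blast
  then have "{k. w k \<in> iacts} \<subseteq> {..<?a + (b - a)}" using not_less by blast
  then have "finite {k. w k \<in> iacts}" using finite_subset by blast
  then show False using nondiv w(1) by (auto simp: divergent_def)
qed

lemma run_length_bound:
  "run (gstep A n) (ginit A) (p @ xs) g \<Longrightarrow>
     length xs \<le> (length (filter (\<lambda>a. a \<in> iacts) xs) + 1) * (card gstates + 1)"
proof (induction xs arbitrary: p rule: length_induct)
  case (1 xs)
  show ?case
  proof (cases "\<exists>a\<in>set xs. a \<in> iacts")
    case False
    then show ?thesis using invisible_run_bound[OF "1.prems"] by simp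
  next
    case True
    then obtain u a v where uav: "xs = u @ a # v" "a \<in> iacts" "\<forall>b\<in>set u. b \<notin> iacts"
      using split_list_first_prop[OF True] by blast
    then obtain g1 where "run (gstep A n) (ginit A) (p @ u) g1"
      using "1.prems" by (auto simp: run_append)
    then have "length u \<le> card gstates" using invisible_run_bound uav(3) by blast
    moreover have "length v \<le> (length (filter (\<lambda>a. a \<in> iacts) v) + 1) * (card gstates + 1)"
    proof -
      have "run (gstep A n) (ginit A) ((p @ u @ [a]) @ v) g" using "1.prems" uav(1) by simp
      moreover have "length v < length xs" using uav(1) by simp
      ultimately show ?thesis using "1.IH" by blast
    qed
    ultimately show ?thesis using uav by (simp add: filter_empty_conv)
  qed
qed

lemma ievent_iff_iacts: "wf_event x \<Longrightarrow> ievent i x \<longleftrightarrow> eact x \<in> iacts"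
  using wf_event_participates_iff[OF _ iface] by (simp add: ievent_def)

text \<open>Apart from e itself, the interface events in the past of e are i-events that are not cut-offs,
  and these have pairwise different global states.\<close>

lemma visible_past_card:
  assumes I: "alg_inv E cp" and eE: "e \<in> E"
  shows "card {x \<in> past e. eact x \<in> iacts} \<le> card gstates + 1"
proof -
  let ?NC = "{x \<in> E. x \<notin> fst ` cp \<and> ievent i x}"
  have "{x \<in> past e. eact x \<in> iacts} \<subseteq> insert e ?NC"
  proof
    fix x assume x: "x \<in> {x \<in> past e. eact x \<in> iacts}"
    show "x \<in> insert e ?NC"
    proof (cases "x = e")
      case False
      then have "causal_less x e" using x past_causal_less by blast
      then have "x \<notin> fst ` cp" using alg_invD(7)[OF I eE] by blast
      moreover have "x \<in> E" using alg_invD(5)[OF I eE] x by blast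
      moreover have "wf_event x" using config_wf_event[OF alg_invD(4)[OF I eE]] x by blast
      ultimately show ?thesis using x ievent_iff_iacts by simp
    qed simp
  qed
  moreover have cNC: "card ?NC \<le> card gstates"
  proof (rule card_inj_on_le[OF _ _ finite_gstates])
    show "inj_on (\<lambda>x. cut_state (Mark A n x)) ?NC"
      using alg_invD(8)[OF I] St_eq_iff unfolding inj_on_def by blast
    have "cut_state (Mark A n x) \<in> gstates" if "x \<in> E" for x
      using config_gstates alg_invD(4)[OF I that] by (simp add: Mark_eq)
    then show "(\<lambda>x. cut_state (Mark A n x)) ` ?NC \<subseteq> gstates" by blast
  qed
  moreover have "finite ?NC" using alg_invD(1)[OF I] by simp
  ultimately have "card {x \<in> past e. eact x \<in> iacts} \<le> Suc (card ?NC)"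
    using card_mono[of "insert e ?NC" "{x \<in> past e. eact x \<in> iacts}"] card_insert_if[of ?NC e]
    by (simp split: if_splits)
  then show ?thesis using cNC by simp
qed

lemma past_card_bound:
  assumes I: "alg_inv E cp" and eE: "e \<in> E"
  shows "card (past e) \<le> (card gstates + 2) * (card gstates + 1)"
proof -
  obtain \<rho> where \<rho>: "set \<rho> = past e" "distinct \<rho>"
      "run (gstep A n) (ginit A) (map eact \<rho>) (cut_state (marking (past e)))"
    using config_run[OF alg_invD(4)[OF I eE]] by blast
  let ?visible = "length (filter (\<lambda>a. a \<in> iacts) (map eact \<rho>))"
  have "length (filter (\<lambda>x. eact x \<in> iacts) \<rho>) = card (set (filter (\<lambda>x. eact x \<in> iacts) \<rho>))"
    using distinct_card[symmetric] distinct_filter \<rho>(2) by blast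
  then have "?visible = card {x \<in> past e. eact x \<in> iacts}" using \<rho>(1) by (simp add: filter_map comp_def)
  then have "?visible + 1 \<le> card gstates + 2" using visible_past_card[OF I eE] by simp
  then have "(?visible + 1) * (card gstates + 1) \<le> (card gstates + 2) * (card gstates + 1)"
    by (rule mult_right_mono) simp
  moreover have "length (map eact \<rho>) \<le> (?visible + 1) * (card gstates + 1)"
    using run_length_bound[of "[]" "map eact \<rho>"] \<rho>(3) by (simp only: append_Nil)
  moreover have "card (past e) = length \<rho>" using distinct_card[OF \<rho>(2)] \<rho>(1) by simp
  ultimately show ?thesis by simp
qed

definition small_events :: "nat \<Rightarrow> ('a, 's) event set" where
  "small_events m = {e. config (past e) \<and> card (past e) \<le> m}"

lemma finite_gtrans: "finite (gtrans A n)"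
proof -
  let ?T = "{t. (\<forall>j<n. t j \<in> insert None (Some ` lts_trans (A j))) \<and> (\<forall>j\<ge>n. t j = (\<lambda>_. None) j)}"
  have "finite (lts_trans (A j))" if "j < n" for j
    using fin that unfolding finite_lts_def by (meson finite_SigmaI finite_subset)
  then have "finite ?T" by (intro finite_funs) simp
  moreover have "finite (gacts A n)" unfolding gacts_def using fin finite_lts_def by auto
  moreover have "gtrans A n \<subseteq> gacts A n \<times> ?T"
  proof
    fix x assume x: "x \<in> gtrans A n"
    obtain a t where at: "x = (a, t)" by (cases x)
    have "t j \<in> insert None (Some ` lts_trans (A j))" if j: "j < n" for j
    proof -
      have "if a \<in> lts_acts (A j) then \<exists>tr. t j = Some tr \<and> tr \<in> lts_trans (A j) \<and> lts_lab (A j) tr = a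
          else t j = None"
        using x at j unfolding gtrans_def by blast
      then show ?thesis by (cases "a \<in> lts_acts (A j)") auto
    qed
    moreover have "a \<in> gacts A n" "\<forall>j\<ge>n. t j = None" using x at unfolding gtrans_def by auto
    ultimately show "x \<in> gacts A n \<times> ?T" using at by simp
  qed
  ultimately show ?thesis by (meson finite_SigmaI finite_subset)
qed

lemma inputs_of_small_event:
  assumes e: "e \<in> small_events (Suc m)"
  shows "ein e \<subseteq> M0 A n \<union> outputs (small_events m)"
proof
  fix b assume b: "b \<in> ein e"
  have cpe: "config (past e)" using e by (simp add: small_events_def)
  have "b \<in> M0 A n \<union> outputs (past e)" using cpe past_self b unfolding config_def by blast
  moreover have "x \<in> small_events m" if "x \<in> past e" "(x, e) \<in> dpred" for x
  proof -
    have "finite (past e)" using cpe by (simp add: config_def)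
    then have "card (past x) < card (past e)" using dpred_past_psubset[OF that(2)] psubset_card_mono by blast
    then show ?thesis using e config_past[OF cpe that(1)] by (simp add: small_events_def)
  qed
  ultimately show "b \<in> M0 A n \<union> outputs (small_events m)" using input_from_dpred[OF b] by blast
qed

lemma small_event_wf: "e \<in> small_events m \<Longrightarrow> wf_event e"
  using config_wf_event[OF _ past_self] by (simp add: small_events_def)

lemma finite_small_events: "finite (small_events m)"
proof (induction m)
  case 0
  have "e \<notin> small_events 0" for e
  proof
    assume "e \<in> small_events 0"
    then have "finite (past e)" "card (past e) = 0" by (simp_all add: small_events_def config_def)
    then have "past e = {}" by simp
    then show False using past_self by blast
  qed
  then have "small_events 0 = {}" by blast
  then show ?case by simp
next
  case (Suc m)
  let ?X = "M0 A n \<union> outputs (small_events m)"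
  let ?F = "(\<lambda>((a, t), M). Ev a t M) ` (gtrans A n \<times> {M. fset M \<subseteq> ?X})"
  have "finite (eout e)" if "e \<in> small_events m" for e
    using finite_eout[OF small_event_wf[OF that]] .
  then have "finite ?X" using Suc finite_M0 by (simp add: outputs_def)
  then have "finite ?F" using finite_gtrans finite_fsets[OF \<open>finite ?X\<close>] by simp
  moreover have "small_events (Suc m) \<subseteq> ?F"
  proof
    fix e assume e: "e \<in> small_events (Suc m)"
    obtain a t M where eq: "e = Ev a t M" by (cases e)
    have "(a, t) \<in> gtrans A n" using small_event_wf[OF e] eq by (simp add: wf_event_def)
    moreover have "fset M \<subseteq> ?X" using inputs_of_small_event[OF e] eq by simp
    ultimately have "((a, t), M) \<in> gtrans A n \<times> {M. fset M \<subseteq> ?X}" by simp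
    then show "e \<in> ?F" unfolding eq by (rule rev_image_eqI) simp
  qed
  ultimately show ?case by (rule finite_subset[rotated])
qed

theorem alg_terminates: "\<not> (\<exists>f. f 0 = ({}, {}) \<and> (\<forall>k. alg_step A n i (f k) (f (Suc k))))"
proof
  assume "\<exists>f. f 0 = ({}, {}) \<and> (\<forall>k. alg_step A n i (f k) (f (Suc k)))"
  then obtain f where f0: "f 0 = ({}, {})" and fs: "\<forall>k. alg_step A n i (f k) (f (Suc k))" by blast
  have "(alg_step A n i)\<^sup>*\<^sup>* ({}, {}) (f k)" for k
  proof (induction k)
    case (Suc k)
    then show ?case using fs by (meson rtranclp.rtrancl_into_rtrancl)
  qed (simp add: f0)
  then have I: "alg_inv (fst (f k)) (snd (f k))" for k using alg_inv_reachable by blast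
  have card: "card (fst (f k)) = k" for k
  proof (induction k)
    case (Suc k)
    obtain e where "e \<notin> fst (f k)" "fst (f (Suc k)) = insert e (fst (f k))"
      using alg_inv_step(2)[of "fst (f k)" "snd (f k)" "f (Suc k)"] I[of k] fs by auto
    moreover have "finite (fst (f k))" using alg_invD(1)[OF I[of k]] .
    ultimately show ?case using Suc by simp
  qed (simp add: f0)
  define L where "L = (card gstates + 2) * (card gstates + 1)"
  have "fst (f k) \<subseteq> small_events L" for k
    using alg_invD(4)[OF I[of k]] past_card_bound[OF I[of k]] by (auto simp: small_events_def L_def)
  then have "card (fst (f (Suc (card (small_events L))))) \<le> card (small_events L)"
    using card_mono[OF finite_small_events] by blast
  then show False using card by simp
qed

end

section \<open>Soundness and completeness of the folding\<close>

context composition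
begin

lemma finite_marking: "config F \<Longrightarrow> finite (marking F)"
proof -
  assume c: "config F"
  have "finite (outputs F)" unfolding outputs_def using c by (auto simp: config_def intro: finite_eout)
  then show ?thesis unfolding marking_def using finite_M0 by auto
qed

text \<open>The witness consumes exactly the conditions of the cut that belong to the participating
  components.\<close>

lemma gstep_extension:
  assumes cF: "config F" and st: "gstep A n (cut_state (marking F)) a h"
  shows "\<exists>ev. wf_event ev \<and> eact ev = a \<and> ein ev \<subseteq> marking F \<and> cut_state (fire (marking F) ev) = h"
proof -
  let ?K = "marking F"
  have cK: "is_cut ?K" using config_cut[OF cF] .
  from st obtain t where t: "(a, t) \<in> gtrans A n" "gmove t (cut_state ?K) h" by (auto simp: gstep_def)
  have mv: "case t j of None \<Rightarrow> h j = cut_state ?K j | Some (p, q) \<Rightarrow> cut_state ?K j = p \<and> h j = q" for j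
    using t(2) by (simp add: gmove_def)
  have ltn: "t j \<noteq> None \<Longrightarrow> j < n" for j using t(1) unfolding gtrans_def by (cases "j < n") auto
  let ?Ms = "{c \<in> ?K. t (fst (clabel c)) \<noteq> None}"
  define ev where "ev = Ev a t (Abs_fset ?Ms)"
  have ein: "ein ev = ?Ms" unfolding ev_def using finite_marking[OF cF] by (simp add: Abs_fset_inverse)
  have label: "clabel c = (fst (clabel c), p)" if "c \<in> ?K" "t (fst (clabel c)) = Some (p, q)" for c p q
  proof -
    have "cond_at ?K (fst (clabel c)) = c" using cond_at_eq[OF cK that(1)] by simp
    then have "cut_state ?K (fst (clabel c)) = snd (clabel c)" using ltn that(2) by (simp add: cut_state_def)
    then show ?thesis using mv[of "fst (clabel c)"] that(2) by (simp add: prod_eq_iff)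
  qed
  have "clabel ` ?Ms = preset t"
  proof (intro equalityI subsetI)
    fix x assume "x \<in> clabel ` ?Ms"
    then obtain c p q where "c \<in> ?K" "t (fst (clabel c)) = Some (p, q)" "x = clabel c" by auto
    then show "x \<in> preset t" using label by (force simp: preset_def)
  next
    fix x assume "x \<in> preset t"
    then obtain j p q where x: "x = (j, p)" "t j = Some (p, q)" by (auto simp: preset_def)
    have c: "cond_at ?K j \<in> ?K" "fst (clabel (cond_at ?K j)) = j" using cond_at_in[OF cK ltn] x(2) by auto
    then have "clabel (cond_at ?K j) = x" using label x by fastforce
    then show "x \<in> clabel ` ?Ms" using c x(2) by force
  qed
  then have w: "wf_event ev" unfolding wf_event_def using ein t(1) by (simp add: ev_def)
  moreover have "ein ev \<subseteq> ?K" using ein by blast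
  moreover have "cut_state (fire ?K ev) = h"
    using fire_gmove[OF cK w] ein t(2) gmove_det by (simp add: ev_def)
  moreover have "eact ev = a" by (simp add: ev_def)
  ultimately show ?thesis by blast
qed

lemma cond_at_fire_seq_idle:
  "is_cut K \<Longrightarrow> firable K u \<Longrightarrow> \<forall>x\<in>set u. wf_event x \<and> etr x j = None \<Longrightarrow> j < n \<Longrightarrow>
     cond_at (fire_seq K u) j = cond_at K j"
proof (induction u arbitrary: K)
  case (Cons x u)
  then have w: "wf_event x" "etr x j = None" "ein x \<subseteq> K" by auto
  have "cond_at (fire_seq (fire K x) u) j = cond_at (fire K x) j"
    using Cons.IH[OF fire_at_cut(1)[OF Cons.prems(1) w(1,3)]] Cons.prems by simp
  also have "\<dots> = cond_at K j" using fire_at_cut(2)[OF Cons.prems(1) w(1,3) Cons.prems(4)] w(2) by simp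
  finally show ?case by simp
qed simp

text \<open>The first event involving component j would have to consume b.\<close>

lemma firable_idle_if_cond_kept:
  assumes K: "is_cut K" and f: "firable K \<rho>" and w: "\<forall>x\<in>set \<rho>. wf_event x"
    and b: "b \<in> K" "fst (clabel b) = j" and kept: "\<forall>x\<in>set \<rho>. b \<notin> ein x"
  shows "\<forall>x\<in>set \<rho>. etr x j = None"
proof (rule ccontr)
  assume "\<not> (\<forall>x\<in>set \<rho>. etr x j = None)"
  then have "\<exists>x\<in>set \<rho>. etr x j \<noteq> None" by blast
  then obtain u x v where uxv: "\<rho> = u @ x # v" "etr x j \<noteq> None" "\<forall>y\<in>set u. \<not> etr y j \<noteq> None"
    by (rule split_list_first_propE)
  have fu: "firable K u" and fx: "ein x \<subseteq> fire_seq K u"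
    using f uxv(1) firable_append[of K u "x # v"] by auto
  have "\<forall>y\<in>set u. etr y j = None" using uxv(3) by blast
  then have wu: "\<forall>y\<in>set u. wf_event y \<and> etr y j = None" using w uxv(1) by simp
  have j: "j < n" using K b unfolding is_cut_def by blast
  have cu: "is_cut (fire_seq K u)" using firable_run[OF K fu] wu by auto
  have "cond_at (fire_seq K u) j = b"
    using cond_at_fire_seq_idle[OF K fu wu j] cond_at_eq[OF K b] by simp
  then have "b \<in> ein x"
    using ein_at_cut[OF cu _ fx] cond_at_in[OF cu j] uxv(2) w uxv(1) by auto
  then show False using kept uxv(1) by simp
qed

lemma config_past_minus_self:
  assumes cQ: "config (past e)"
  shows "config (past e - {e})" and "ein e \<subseteq> marking (past e - {e})"
    and "marking (past e) = fire (marking (past e - {e})) e"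
proof -
  let ?Q' = "past e - {e}"
  show cQ': "config ?Q'"
  proof (rule config_subset[OF cQ])
    show "?Q' \<subseteq> past e" by blast
    show "z \<in> ?Q'" if "x \<in> ?Q'" "(z, x) \<in> dpred" for x z
      using that dpred_past dpred_not_from_past by blast
  qed
  have "past e - ?Q' = {e}" "?Q' \<subseteq> past e" using past_self by auto
  moreover have "\<And>y. (y, e) \<in> dpred \<Longrightarrow> y \<notin> past e - ?Q'"
    using dpred_trancl_irrefl by auto
  ultimately show inp: "ein e \<subseteq> marking ?Q'"
    using minimal_event_enabled[OF cQ' cQ, of e] by blast
  have "insert e ?Q' = past e" using past_self by blast
  then show "marking (past e) = fire (marking ?Q') e"
    using config_insert[OF cQ' config_wf_event[OF cQ past_self] inp] by simp
qed

end

context nondivergent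
begin

text \<open>No event of the past of e outside P involves the interface, since none of them consumes b.\<close>

lemma istep_to_past:
  assumes cP: "config P" and cQ: "config (past e)" and PQ: "P \<subseteq> past e"
    and bP: "b \<in> marking P" and bi: "fst (clabel b) = i" and be: "b \<in> ein e" and ie: "ievent i e"
  shows "istep (cut_state (marking P)) (eact e) (cut_state (marking (past e)))"
proof -
  let ?Q' = "past e - {e}"
  note Q' = config_past_minus_self[OF cQ]
  have we: "wf_event e" using config_wf_event[OF cQ past_self] .
  have "e \<notin> P" using bP be by (auto simp: marking_def inputs_iff)
  then have PQ': "P \<subseteq> ?Q'" using PQ by blast
  obtain \<rho> where \<rho>: "set \<rho> = ?Q' - P" "firable (marking P) \<rho>" "fire_seq (marking P) \<rho> = marking ?Q'"
    using config_linearization[OF cP Q'(1) PQ'] by blast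
  have cutP: "is_cut (marking P)" using config_cut[OF cP] .
  have w\<rho>: "\<forall>x\<in>set \<rho>. wf_event x" using \<rho>(1) Q'(1) config_wf_event by blast
  have "\<forall>x\<in>set \<rho>. b \<notin> ein x"
    using \<rho>(1) be config_conflict_free[OF cQ _ past_self] by blast
  then have idle: "\<forall>x\<in>set \<rho>. etr x i = None"
    using firable_idle_if_cond_kept[OF cutP \<rho>(2) w\<rho> bP bi] by blast
  have "run (gstep A n) (cut_state (marking P)) (map eact \<rho>) (cut_state (marking ?Q'))"
    using firable_run[OF cutP \<rho>(2) w\<rho>] \<rho>(3) by simp
  moreover have "gstep A n (cut_state (marking ?Q')) (eact e) (cut_state (marking (past e)))"
    using fire_gstep[OF config_cut[OF Q'(1)] we Q'(2)] Q'(3) by simp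
  moreover have "\<forall>a\<in>set (map eact \<rho>). a \<notin> iacts"
  proof -
    have "eact x \<notin> iacts" if "x \<in> set \<rho>" for x
      using idle that ievent_iff_iacts[OF w\<rho>[rule_format, OF that]] by (simp add: ievent_def)
    then show ?thesis by auto
  qed
  moreover have "eact e \<in> iacts" using ie ievent_iff_iacts[OF we] by simp
  ultimately show ?thesis unfolding istep_def run_snoc by blast
qed

end

locale terminated = nondivergent A n i for A :: "nat \<Rightarrow> ('a, 's) lts" and n i +
  fixes s :: "('a, 's) alg_state"
  assumes reachable: "(alg_step A n i)\<^sup>*\<^sup>* ({}, {}) s" and stopped: "alg_terminated A n s"
begin

lemma inv: "alg_inv (fst s) (snd s)"
  using alg_inv_reachable[OF reachable] .

lemma cond_at_past_ievent: "y \<in> fst s \<Longrightarrow> ievent i y \<Longrightarrow> cond_at (marking (past y)) i = Cout y i"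
  using cond_at_past alg_invD(4)[OF inv] by (simp add: ievent_def)

abbreviation feq :: "(('a, 's) cond \<times> ('a, 's) cond) set" where
  "feq \<equiv> foldeq A n i s"

lemma foldeq_eq: "feq = (Id_on (iconds A n i (fst s)) \<union> companion_conds (snd s) \<union> (companion_conds (snd s))\<inverse>)\<^sup>*"
proof -
  have eq: "(Mj A n e i, Mj A n e' i) = (Cout e i, Cout e' i)" if "(e, e') \<in> snd s" for e e'
    using alg_invD(6)[OF inv that] cond_at_past_ievent by (simp add: Mj_eq Mark_eq)
  have "{(Mj A n e i, Mj A n e' i) | e e'. (e, e') \<in> snd s} = companion_conds (snd s)"
    unfolding companion_conds_def
  proof (intro equalityI subsetI)
    fix p assume "p \<in> {(Mj A n e i, Mj A n e' i) | e e'. (e, e') \<in> snd s}"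
    then obtain e e' where p: "p = (Mj A n e i, Mj A n e' i)" "(e, e') \<in> snd s" by blast
    then have "p = (Cout e i, Cout e' i)" using eq by simp
    then show "p \<in> {(Cout c i, Cout c' i) | c c'. (c, c') \<in> snd s}" using p(2) by blast
  next
    fix p assume "p \<in> {(Cout c i, Cout c' i) | c c'. (c, c') \<in> snd s}"
    then obtain e e' where p: "p = (Cout e i, Cout e' i)" "(e, e') \<in> snd s" by blast
    then have "p = (Mj A n e i, Mj A n e' i)" using eq by simp
    then show "p \<in> {(Mj A n e i, Mj A n e' i) | e e'. (e, e') \<in> snd s}" using p(2) by blast
  qed
  then show ?thesis unfolding foldeq_def Let_def by simp
qed

lemma foldeq_sym: "(b, c) \<in> feq \<Longrightarrow> (c, b) \<in> feq"
proof -
  have "sym (Id_on (iconds A n i (fst s)) \<union> companion_conds (snd s) \<union> (companion_conds (snd s))\<inverse>)"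
    unfolding sym_def by auto
  then have "sym feq" unfolding foldeq_eq by (rule sym_rtrancl)
  then show "(b, c) \<in> feq \<Longrightarrow> (c, b) \<in> feq" unfolding sym_def by blast
qed

lemma foldeq_class: "(b, c) \<in> feq \<Longrightarrow> feq `` {b} = feq `` {c}"
proof -
  assume bc: "(b, c) \<in> feq"
  have tr: "(x, y) \<in> feq \<Longrightarrow> (y, z) \<in> feq \<Longrightarrow> (x, z) \<in> feq" for x y z
    unfolding foldeq_eq by (rule rtrancl_trans)
  show ?thesis using tr bc foldeq_sym[OF bc] by blast
qed

lemma foldeq_refl: "(b, b) \<in> feq"
  unfolding foldeq_eq by simp

lemma linked_foldeq: "linked (snd s) \<subseteq> feq"
  unfolding foldeq_eq by (rule rtrancl_mono) blast

definition represents :: "('a, 's) cond \<Rightarrow> (nat \<Rightarrow> 's) \<Rightarrow> bool" where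
  "represents b g \<longleftrightarrow> (b = C0 i (lts_init (A i)) \<and> g = ginit A)
     \<or> (\<exists>y\<in>fst s. ievent i y \<and> b = Cout y i \<and> g = cut_state (Mark A n y))"

lemma represents_companion:
  assumes "represents (Cout e i) g" and "(e, e') \<in> snd s \<or> (e', e) \<in> snd s"
  shows "represents (Cout e' i) g"
proof -
  from assms(1) have "g = cut_state (Mark A n e)" by (auto simp: represents_def)
  moreover from assms(2) have "St A n e = St A n e'" "e' \<in> fst s" "ievent i e'"
    using alg_invD(6)[OF inv] by auto
  ultimately show ?thesis using St_eq_iff by (auto simp: represents_def)
qed

lemma represents_foldeq: "(b, c) \<in> feq \<Longrightarrow> represents b g \<Longrightarrow> represents c g"
  unfolding foldeq_eq
proof (induction rule: rtrancl_induct)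
  case (step c1 c2)
  then have "represents c1 g" by blast
  with step.hyps(2) show ?case
    using represents_companion by (auto simp: companion_conds_def)
qed

lemma represents_step:
  assumes rep: "represents b g" and nt: "(b, a, b') \<in> Ntrans i (fst s)"
  shows "\<exists>g'. istep g a g' \<and> represents b' g'"
proof -
  from nt obtain e where e: "e \<in> fst s" "ievent i e" "b \<in> ein e" "fst (clabel b) = i"
    "a = eact e" "b' = Cout e i"
    unfolding Ntrans_def by blast
  have cQ: "config (past e)" using alg_invD(4)[OF inv e(1)] .
  have rep': "represents b' (cut_state (marking (past e)))" using e by (auto simp: represents_def Mark_eq)
  from rep[unfolded represents_def] show ?thesis
  proof (elim disjE bexE conjE)
    assume b: "b = C0 i (lts_init (A i))" and g: "g = ginit A"
    have "b \<in> marking {}" using b iface by (simp add: M0_iff)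
    then have "istep (cut_state (marking {})) (eact e) (cut_state (marking (past e)))"
      using istep_to_past[OF config_empty cQ _ _ e(4) e(3) e(2)] by simp
    then show ?thesis using g e(5) rep' cut_state_M0 by auto
  next
    fix y assume y: "y \<in> fst s" "ievent i y" "b = Cout y i" and g: "g = cut_state (Mark A n y)"
    have "(y, e) \<in> dpred" using e(3) y(3) by (auto simp: dpred_iff)
    then have PQ: "past y \<subseteq> past e" using dpred_past past_self past_mono by blast
    have "b \<in> marking (past y)" using Cout_in_past_marking y by (simp add: ievent_def)
    then have "istep (cut_state (marking (past y))) (eact e) (cut_state (marking (past e)))"
      using istep_to_past[OF alg_invD(4)[OF inv y(1)] cQ PQ _ e(4) e(3) e(2)] by simp
    then show ?thesis using g e(5) rep' by (auto simp: Mark_eq)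
  qed
qed

theorem TrFold_subset_istep_traces: "TrFold A n i s \<subseteq> traces_of (ginit A) istep"
  unfolding TrFold_def
proof (rule simulation_traces[where R = "\<lambda>X g. \<forall>b\<in>X. represents b g"])
  show "\<forall>b\<in>feq `` {C0 i (lts_init (A i))}. represents b (ginit A)"
    using represents_foldeq by (auto simp: represents_def)
next
  fix X g a Y
  assume R: "\<forall>b\<in>X. represents b g" and fs: "fold_step A n i s X a Y"
  then obtain b b' where bb: "(b, a, b') \<in> Ntrans i (fst s)" "X = feq `` {b}" "Y = feq `` {b'}"
    unfolding fold_step_def by blast
  have "represents b g" using R bb foldeq_refl by blast
  then obtain g' where g': "istep g a g'" "represents b' g'" using represents_step bb(1) by blast
  then show "\<exists>g'. istep g a g' \<and> (\<forall>c\<in>Y. represents c g')" using bb(3) represents_foldeq by blast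
qed

abbreviation cutoffs :: "('a, 's) event set" where
  "cutoffs \<equiv> fst ` snd s"

text \<open>The configurations at which the folding resumes an interface step.\<close>

definition base_config :: "('a, 's) event set \<Rightarrow> bool" where
  "base_config Q \<longleftrightarrow> Q = {} \<or> (\<exists>y\<in>fst s. y \<notin> cutoffs \<and> ievent i y \<and> Q = past y)"

lemma past_disjoint_cutoffs:
  assumes "y \<in> fst s" and "y \<notin> cutoffs"
  shows "past y \<inter> cutoffs = {}"
proof -
  have "x \<notin> cutoffs" if x: "x \<in> past y" for x
  proof (cases "x = y")
    case False
    then show ?thesis using past_causal_less[OF x] alg_invD(7)[OF inv assms(1)] by blast
  qed (use assms in simp)
  then show ?thesis by blast
qed

lemma base_config_props: "base_config Q \<Longrightarrow> config Q \<and> Q \<subseteq> fst s \<and> Q \<inter> cutoffs = {}"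
  unfolding base_config_def
  using alg_invD(4,5)[OF inv] past_disjoint_cutoffs config_empty by blast

text \<open>Since the algorithm has stopped, every possible extension of a cut-off-free configuration
  of the net already belongs to it.\<close>

lemma extension_in_net:
  assumes cF: "config F" and FE: "F \<subseteq> fst s" and FC: "F \<inter> cutoffs = {}"
    and w: "wf_event ev" and inp: "ein ev \<subseteq> marking F"
  shows "ev \<in> fst s"
proof (rule ccontr)
  assume nE: "ev \<notin> fst s"
  have "pext A n (fst s) ev"
    unfolding pext_def using nE w inp config_reach[OF cF FE] by (auto simp: wf_event_def)
  moreover have "x \<notin> cutoffs" if "causal_less x ev" for x
  proof -
    obtain z where z: "(x, z) \<in> dpred\<^sup>*" "(z, ev) \<in> dpred"
      using \<open>causal_less x ev\<close> tranclD2 unfolding causal_less_def by metis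
    then obtain j where "Cout z j \<in> marking F" using inp by (auto simp: dpred_iff)
    then have "z \<in> F" by (auto simp: marking_def Cout_outputs Cout_notin_M0)
    then have "x \<in> F" using config_past_subset[OF cF] z(1) by (auto simp: past_def)
    then show ?thesis using FC by blast
  qed
  ultimately have "allowed_ext A n s ev" by (simp add: allowed_ext_def)
  then show False using stopped by (auto simp: alg_terminated_def)
qed

lemma invisible_extension:
  "config F \<Longrightarrow> F \<subseteq> fst s \<Longrightarrow> F \<inter> cutoffs = {} \<Longrightarrow> run (gstep A n) (cut_state (marking F)) u h \<Longrightarrow>
   \<forall>b\<in>set u. b \<notin> iacts \<Longrightarrow>
   \<exists>F'. config F' \<and> F \<subseteq> F' \<and> F' \<subseteq> fst s \<and> F' \<inter> cutoffs = {} \<and> (\<forall>x\<in>F' - F. \<not> ievent i x)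
        \<and> cut_state (marking F') = h \<and> cond_at (marking F') i = cond_at (marking F) i"
proof (induction u arbitrary: F)
  case Nil
  then show ?case by (intro exI[of _ F]) simp
next
  case (Cons b u)
  then obtain h1 where h1: "gstep A n (cut_state (marking F)) b h1" "run (gstep A n) h1 u h" by auto
  obtain ev where ev: "wf_event ev" "eact ev = b" "ein ev \<subseteq> marking F"
      "cut_state (fire (marking F) ev) = h1"
    using gstep_extension[OF Cons.prems(1) h1(1)] by blast
  have evE: "ev \<in> fst s" using extension_in_net[OF Cons.prems(1-3) ev(1,3)] .
  have ins: "ev \<notin> F \<and> config (insert ev F) \<and> marking (insert ev F) = fire (marking F) ev"
    using config_insert[OF Cons.prems(1) ev(1,3)] .
  have ni: "\<not> ievent i ev" using ev(1,2) Cons.prems(5) ievent_iff_iacts by auto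
  then have nC: "ev \<notin> cutoffs" using alg_invD(6)[OF inv] by force
  have cond: "cond_at (marking (insert ev F)) i = cond_at (marking F) i"
    using ins fire_at_cut(2)[OF config_cut[OF Cons.prems(1)] ev(1,3) iface] ni
    by (simp add: ievent_def)
  obtain F' where F': "config F'" "insert ev F \<subseteq> F'" "F' \<subseteq> fst s" "F' \<inter> cutoffs = {}"
      "\<forall>x\<in>F' - insert ev F. \<not> ievent i x" "cut_state (marking F') = h"
      "cond_at (marking F') i = cond_at (marking (insert ev F)) i"
    using Cons.IH[of "insert ev F"] ins ev(4) evE Cons.prems nC h1(2) by auto
  have "\<forall>x\<in>F' - F. \<not> ievent i x" using F'(5) ni by blast
  then show ?case using F' cond by (intro exI[of _ F']) auto
qed

lemma cutoff_representative:
  assumes "ev \<in> fst s" and "ievent i ev"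
  obtains y where "y \<in> fst s" "y \<notin> cutoffs" "ievent i y" "St A n y = St A n ev" "(Cout ev i, Cout y i) \<in> feq"
proof (cases "ev \<in> cutoffs")
  case False
  then show ?thesis using that[of ev] assms foldeq_refl by blast
next
  case True
  then show ?thesis using that alg_invD(9)[OF inv True] linked_foldeq by blast
qed

lemma invisible_run_from_past:
  assumes c: "config F" and ev: "ev \<in> F" and Q: "Q \<subseteq> past ev"
    and idle: "\<forall>x\<in>F - Q. x \<noteq> ev \<longrightarrow> \<not> ievent i x"
  shows "\<exists>u. (\<forall>b\<in>set u. b \<notin> iacts) \<and> run (gstep A n) (cut_state (marking (past ev))) u (cut_state (marking F))"
proof -
  obtain \<rho> where \<rho>: "set \<rho> = F - past ev"
      "run (gstep A n) (cut_state (marking (past ev))) (map eact \<rho>) (cut_state (marking F))"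
    using config_cut_run(2)[OF config_past[OF c ev] c config_past_subset[OF c ev]] by blast
  have "eact x \<notin> iacts" if "x \<in> set \<rho>" for x
  proof -
    have "x \<in> F - Q" "x \<noteq> ev" using that \<rho>(1) Q past_self by auto
    then show ?thesis using idle ievent_iff_iacts config_wf_event[OF c] by blast
  qed
  then show ?thesis using \<rho>(2) by (intro exI[of _ "map eact \<rho>"]) auto
qed

definition simulates :: "(nat \<Rightarrow> 's) \<Rightarrow> ('a, 's) cond set \<Rightarrow> bool" where
  "simulates g X \<longleftrightarrow> (\<exists>Q. base_config Q \<and> X = feq `` {cond_at (marking Q) i}
      \<and> (\<exists>u. (\<forall>b\<in>set u. b \<notin> iacts) \<and> run (gstep A n) (cut_state (marking Q)) u g))"

lemma base_config_below:
  assumes Q: "base_config Q" and b0: "cond_at (marking Q) i \<in> ein ev"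
  shows "Q \<subseteq> past ev"
proof (cases "Q = {}")
  case False
  then obtain y where y: "y \<in> fst s" "ievent i y" "Q = past y"
    using Q unfolding base_config_def by blast
  then have "(y, ev) \<in> dpred" using b0 cond_at_past_ievent by (auto simp: dpred_iff)
  then show ?thesis using y(3) dpred_past past_self past_mono by blast
qed simp

lemma simulates_output:
  assumes ev: "ev \<in> fst s" "ievent i ev" and F: "config F" "ev \<in> F" and Q: "Q \<subseteq> past ev"
    and idle: "\<forall>x\<in>F - Q. x \<noteq> ev \<longrightarrow> \<not> ievent i x"
  shows "simulates (cut_state (marking F)) (feq `` {Cout ev i})"
proof -
  obtain y where y: "y \<in> fst s" "y \<notin> cutoffs" "ievent i y" "St A n y = St A n ev"
      "(Cout ev i, Cout y i) \<in> feq"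
    using cutoff_representative[OF ev] by blast
  obtain u where "\<forall>b\<in>set u. b \<notin> iacts"
      "run (gstep A n) (cut_state (marking (past ev))) u (cut_state (marking F))"
    using invisible_run_from_past[OF F Q idle] by blast
  moreover have "cut_state (marking (past y)) = cut_state (marking (past ev))"
    using y(4) St_eq_iff Mark_eq by simp
  moreover have "feq `` {Cout ev i} = feq `` {cond_at (marking (past y)) i}"
    using foldeq_class[OF y(5)] cond_at_past_ievent[OF y(1) y(3)] by simp
  moreover have "base_config (past y)" unfolding base_config_def using y by blast
  ultimately show ?thesis unfolding simulates_def by (intro exI[of _ "past y"]) auto
qed

lemma simulates_step:
  assumes sim: "simulates g X" and ist: "istep g a g'"
  shows "\<exists>Y. fold_step A n i s X a Y \<and> simulates g' Y"
proof -
  from sim obtain Q u1 where Q: "base_config Q" "X = feq `` {cond_at (marking Q) i}"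
      "\<forall>b\<in>set u1. b \<notin> iacts" "run (gstep A n) (cut_state (marking Q)) u1 g"
    unfolding simulates_def by blast
  from ist obtain u2 where aS: "a \<in> iacts" and u2: "\<forall>b\<in>set u2. b \<notin> iacts"
      "run (gstep A n) g (u2 @ [a]) g'"
    unfolding istep_def by blast
  obtain h where h: "run (gstep A n) (cut_state (marking Q)) (u1 @ u2) h" "gstep A n h a g'"
    using Q(4) u2(2) by (auto simp: run_append)
  have cl: "config Q" "Q \<subseteq> fst s" "Q \<inter> cutoffs = {}" using base_config_props[OF Q(1)] by auto
  obtain F where F: "config F" "Q \<subseteq> F" "F \<subseteq> fst s" "F \<inter> cutoffs = {}" "\<forall>x\<in>F - Q. \<not> ievent i x"
      "cut_state (marking F) = h" "cond_at (marking F) i = cond_at (marking Q) i"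
    using invisible_extension[OF cl h(1)] Q(3) u2(1) by auto
  obtain ev where ev: "wf_event ev" "eact ev = a" "ein ev \<subseteq> marking F" "cut_state (fire (marking F) ev) = g'"
    using gstep_extension[OF F(1)] h(2) F(6) by blast
  have evE: "ev \<in> fst s" using extension_in_net[OF F(1,3,4) ev(1,3)] .
  have ins: "ev \<notin> F \<and> config (insert ev F) \<and> marking (insert ev F) = fire (marking F) ev"
    using config_insert[OF F(1) ev(1,3)] .
  have iev: "ievent i ev" using ev(1,2) aS ievent_iff_iacts by auto
  have b0: "cond_at (marking Q) i \<in> ein ev" "fst (clabel (cond_at (marking Q) i)) = i"
    using ein_at_cut[OF config_cut[OF F(1)] ev(1,3)] cond_at_in[OF config_cut[OF F(1)] iface]
      cond_at_in[OF config_cut[OF cl(1)] iface] F(7) iev by (auto simp: ievent_def)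
  then have "fold_step A n i s X a (feq `` {Cout ev i})"
    unfolding fold_step_def Ntrans_def using Q(2) evE ev(2) iev by blast
  moreover have "simulates g' (feq `` {Cout ev i})"
    using simulates_output[OF evE iev _ _ base_config_below[OF Q(1) b0(1)], of "insert ev F"]
      ins ev(4) F(5) by auto
  ultimately show ?thesis by blast
qed

theorem istep_traces_subset_TrFold: "traces_of (ginit A) istep \<subseteq> TrFold A n i s"
  unfolding TrFold_def
proof (rule simulation_traces[where R = simulates])
  have "cond_at (marking {}) i = C0 i (lts_init (A i))"
    using cond_at_eq[OF is_cut_M0, of "C0 i (lts_init (A i))" i] iface by (simp add: M0_iff)
  then show "simulates (ginit A) (feq `` {C0 i (lts_init (A i))})"
    unfolding simulates_def base_config_def using cut_state_M0
    by (intro exI[of _ "{}"]) (auto intro: exI[of _ "[]"])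
qed (rule simulates_step)

theorem TrFold_eq_proj_TrPar: "TrFold A n i s = proj iacts ` TrPar A n"
  using TrFold_subset_istep_traces istep_traces_subset_TrFold
    istep_traces_subset_proj proj_TrPar_subset_istep_traces by blast

end

theorem theorem1:
  fixes A :: "nat \<Rightarrow> ('a, 's) lts" and n i :: nat
  assumes fin: "\<forall>j<n. finite_lts (A j)"
    and iface: "i < n"
    and nondiv: "\<not> divergent A n i"
  shows "\<not> (\<exists>f. f 0 = ({}, {}) \<and> (\<forall>k. alg_step A n i (f k) (f (Suc k))))
       \<and> (\<forall>s. (alg_step A n i)\<^sup>*\<^sup>* ({}, {}) s \<and> alg_terminated A n s \<longrightarrow>
              finite (fst s) \<and> bp A n (fst s)
              \<and> TrFold A n i s = proj (lts_acts (A i)) ` TrPar A n)"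
proof -
  interpret nondivergent A n i using assms by unfold_locales
  have "finite (fst s) \<and> bp A n (fst s) \<and> TrFold A n i s = proj (lts_acts (A i)) ` TrPar A n"
    if "(alg_step A n i)\<^sup>*\<^sup>* ({}, {}) s" "alg_terminated A n s" for s
  proof -
    interpret terminated A n i s using that by unfold_locales
    show ?thesis using alg_invD(1,2)[OF inv] TrFold_eq_proj_TrPar by blast
  qed
  then show ?thesis using alg_terminates by blast
qed

end
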